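(* Let $\Gamma\subset\mathrm{PGL}(2,\mathbb{C})$ be a torsion-free Kleinian group (of finite covolume). Then the map $H_1(\Gamma;S_1(\mathbb{CP}^1))\to H_1(\Gamma;S_0(\mathbb{CP}^1))$ induced by the boundary map $\partial\colon S_1(\mathbb{CP}^1)\to S_0(\mathbb{CP}^1)$, $\langle z_0,z_1\rangle\mapsto\langle z_1\rangle-\langle z_0\rangle$, is injective.
   Context: $S_n(\mathbb{CP}^1)$ is the free abelian group on ordered $(n+1)$-tuples of distinct points of $\mathbb{CP}^1$ modulo $\langle z_0,\dots,z_n\rangle=\operatorname{sgn}(\tau)\langle z_{\tau(0)},\dots,z_{\tau(n)}\rangle$, a $\mathbb{Z}\Gamma$-module via the action of $\Gamma$ on $\mathbb{CP}^1=\partial\overline{\mathbb{H}}^3$; $H_1(\Gamma;N)$ denotes group homology with coefficients in the $\mathbb{Z}\Gamma$-module $N$. *)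

theory Defs
  imports "HOL-Analysis.Analysis" "HOL-Combinatorics.Permutations"
begin

text \<open>CP^1 = C \<union> {\<infinity>}, modelled as complex option (None = \<infinity>).\<close>
type_synonym pt = "complex option"

definition moeb :: "complex^2^2 \<Rightarrow> pt \<Rightarrow> pt" where
  "moeb A p = (let a = A$1$1; b = A$1$2; c = A$2$1; d = A$2$2 in
     (case p of
        None \<Rightarrow> (if c = 0 then None else Some (a / c))
      | Some z \<Rightarrow> (if c * z + d = 0 then None else Some ((a * z + b) / (c * z + d)))))"

text \<open>PGL(2,C), realised as the group of Moebius transformations of CP^1
  (a Moebius map determines its matrix up to a scalar).\<close>
definition PGL2 :: "(pt \<Rightarrow> pt) set" where
  "PGL2 = {moeb A | A. det A \<noteq> 0}"

definition sl_reps :: "(pt \<Rightarrow> pt) \<Rightarrow> (complex^2^2) set" where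
  "sl_reps g = {A. det A = 1 \<and> moeb A = g}"

definition is_subgroup_PGL2 :: "(pt \<Rightarrow> pt) set \<Rightarrow> bool" where
  "is_subgroup_PGL2 \<Gamma> \<longleftrightarrow> \<Gamma> \<subseteq> PGL2 \<and> id \<in> \<Gamma> \<and>
     (\<forall>g\<in>\<Gamma>. \<forall>h\<in>\<Gamma>. g \<circ> h \<in> \<Gamma>) \<and> (\<forall>g\<in>\<Gamma>. inv g \<in> \<Gamma>)"

text \<open>Discreteness in PGL(2,C): the preimage in SL(2,C) (a double cover)
  is a discrete subset of the matrix space.\<close>
definition discrete_PGL2 :: "(pt \<Rightarrow> pt) set \<Rightarrow> bool" where
  "discrete_PGL2 \<Gamma> \<longleftrightarrow>
     (let P = (\<Union>g\<in>\<Gamma>. sl_reps g) in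
      \<forall>A\<in>P. \<exists>e>0. \<forall>B\<in>P. B \<noteq> A \<longrightarrow> e \<le> dist A B)"

definition kleinian :: "(pt \<Rightarrow> pt) set \<Rightarrow> bool" where
  "kleinian \<Gamma> \<longleftrightarrow> is_subgroup_PGL2 \<Gamma> \<and> discrete_PGL2 \<Gamma>"

definition torsion_free :: "(pt \<Rightarrow> pt) set \<Rightarrow> bool" where
  "torsion_free \<Gamma> \<longleftrightarrow> (\<forall>g\<in>\<Gamma>. \<forall>n::nat. n > 0 \<and> (g ^^ n) = id \<longrightarrow> g = id)"

definition H3 :: "(complex \<times> real) set" where
  "H3 = {p. snd p > 0}"

text \<open>Poincare extension of the Moebius map of an SL(2,C) matrix to H^3.\<close>
definition poincare :: "complex^2^2 \<Rightarrow> complex \<times> real \<Rightarrow> complex \<times> real" where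
  "poincare A p = (let a = A$1$1; b = A$1$2; c = A$2$1; d = A$2$2;
      z = fst p; t = snd p;
      D = (cmod (c * z + d))^2 + (cmod c)^2 * t^2 in
      (((a * z + b) * cnj (c * z + d) + a * cnj c * complex_of_real (t^2)) / complex_of_real D,
       t / D))"

text \<open>Hyperbolic volume dx dy dt / t^3.\<close>
definition hvol :: "(complex \<times> real) set \<Rightarrow> ennreal" where
  "hvol F = (\<integral>\<^sup>+ p. indicator F p * ennreal (1 / (snd p)^3) \<partial>lborel)"

definition finite_covolume :: "(pt \<Rightarrow> pt) set \<Rightarrow> bool" where
  "finite_covolume \<Gamma> \<longleftrightarrow>
     (\<exists>F \<in> sets lborel. F \<subseteq> H3 \<and> hvol F < \<infinity> \<and>
        H3 \<subseteq> (\<Union>g\<in>\<Gamma>. poincare (SOME A. A \<in> sl_reps g) ` F))"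

section \<open>Free abelian groups as finitely supported integer functions\<close>

definition delta :: "'k \<Rightarrow> 'k \<Rightarrow> int" where
  "delta k = (\<lambda>l. if l = k then 1 else 0)"

inductive_set zspan :: "('k \<Rightarrow> int) set \<Rightarrow> ('k \<Rightarrow> int) set" for B where
  zspan_zero: "(\<lambda>_. 0) \<in> zspan B"
| zspan_base: "b \<in> B \<Longrightarrow> b \<in> zspan B"
| zspan_diff: "x \<in> zspan B \<Longrightarrow> y \<in> zspan B \<Longrightarrow> (\<lambda>k. x k - y k) \<in> zspan B"

definition lin :: "('k \<Rightarrow> ('l \<Rightarrow> int)) \<Rightarrow> ('k \<Rightarrow> int) \<Rightarrow> ('l \<Rightarrow> int)" where
  "lin \<phi> c = (\<lambda>l. \<Sum>k\<in>{k. c k \<noteq> 0}. c k * \<phi> k l)"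

text \<open>Generators of S_n: ordered (n+1)-tuples of distinct points.\<close>
definition tuples :: "nat \<Rightarrow> pt list set" where
  "tuples n = {zs. length zs = Suc n \<and> distinct zs}"

definition permute_tuple :: "(nat \<Rightarrow> nat) \<Rightarrow> pt list \<Rightarrow> pt list" where
  "permute_tuple \<tau> zs = map (\<lambda>i. zs ! \<tau> i) [0..<length zs]"

text \<open>Boundary S_n \<rightarrow> S_(n-1): sum of (-1)^i <z_0..(omit z_i)..z_n>.\<close>
definition omit :: "nat \<Rightarrow> 'a list \<Rightarrow> 'a list" where
  "omit i xs = take i xs @ drop (Suc i) xs"

text \<open>A k-chain with coefficients in S_n is represented by an element of
  F_n \<otimes> Z[Gamma^k] = Z[Gamma^k \<times> tuples n], taken modulo R_n \<otimes> Z[Gamma^k],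
  where R_n is the subgroup of sign relations.\<close>

definition chains :: "(pt \<Rightarrow> pt) set \<Rightarrow> nat \<Rightarrow> nat \<Rightarrow> (((pt \<Rightarrow> pt) list \<times> pt list) \<Rightarrow> int) set" where
  "chains \<Gamma> k n = zspan {delta (gs, zs) | gs zs. length gs = k \<and> set gs \<subseteq> \<Gamma> \<and> zs \<in> tuples n}"

definition rel_chains :: "(pt \<Rightarrow> pt) set \<Rightarrow> nat \<Rightarrow> nat \<Rightarrow> (((pt \<Rightarrow> pt) list \<times> pt list) \<Rightarrow> int) set" where
  "rel_chains \<Gamma> k n = zspan {(\<lambda>x. delta (gs, zs) x - sign \<tau> * delta (gs, permute_tuple \<tau> zs) x)
      | gs zs \<tau>. length gs = k \<and> set gs \<subseteq> \<Gamma> \<and> zs \<in> tuples n \<and> \<tau> permutes {..n}}"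

text \<open>Bar differential on generators m[g_1|...|g_k] (left module, g.<z> = <g z>):
  d(m[g_1|..|g_k]) = (g_1^-1 m)[g_2|..|g_k] + sum_{i=1}^{k-1} (-1)^i m[..|g_i g_(i+1)|..]
                     + (-1)^k m[g_1|..|g_(k-1)].\<close>
definition merge_at :: "nat \<Rightarrow> (pt \<Rightarrow> pt) list \<Rightarrow> (pt \<Rightarrow> pt) list" where
  "merge_at i gs = take i gs @ [gs ! i \<circ> gs ! Suc i] @ drop (Suc (Suc i)) gs"

definition bar_d :: "((pt \<Rightarrow> pt) list \<times> pt list) \<Rightarrow> (((pt \<Rightarrow> pt) list \<times> pt list) \<Rightarrow> int)" where
  "bar_d x = (let gs = fst x; zs = snd x; k = length gs in
     (\<lambda>y. delta (tl gs, map (inv (hd gs)) zs) y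
        + (\<Sum>i<k - 1. (-1) ^ Suc i * delta (merge_at i gs, zs) y)
        + (-1) ^ k * delta (butlast gs, zs) y))"

definition coeff_bd :: "((pt \<Rightarrow> pt) list \<times> pt list) \<Rightarrow> (((pt \<Rightarrow> pt) list \<times> pt list) \<Rightarrow> int)" where
  "coeff_bd x = (\<lambda>y. \<Sum>i<length (snd x). (-1) ^ i * delta (fst x, omit i (snd x)) y)"

definition cycles1 :: "(pt \<Rightarrow> pt) set \<Rightarrow> nat \<Rightarrow> (((pt \<Rightarrow> pt) list \<times> pt list) \<Rightarrow> int) set" where
  "cycles1 \<Gamma> n = {c \<in> chains \<Gamma> 1 n. lin bar_d c \<in> rel_chains \<Gamma> 0 n}"

definition boundaries1 :: "(pt \<Rightarrow> pt) set \<Rightarrow> nat \<Rightarrow> (((pt \<Rightarrow> pt) list \<times> pt list) \<Rightarrow> int) set" where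
  "boundaries1 \<Gamma> n = {(\<lambda>y. lin bar_d b y + r y) | b r. b \<in> chains \<Gamma> 2 n \<and> r \<in> rel_chains \<Gamma> 1 n}"

end

theory Submission
  imports Defs
begin

text \<open>
  As a \<Gamma>-module, S_1 is the sum over the \<Gamma>-orbits of unordered pairs {z0, z1}. No element
  of the torsion-free group \<Gamma> swaps the two points of a pair (it would be an involution), so by
  Shapiro's lemma every 1-cycle is homologous to a sum of generators [u] \<otimes> <z0, z1>, one for
  each orbit representative, with u in the stabilizer of z0 and z1.

  Normalize z0 = 0 and z1 = \<infinity>, so that u z = a z. Induce the homomorphism
  v \<mapsto> log |multiplier of v| from the stabilizer of z1 up to \<Gamma>: this is a real 1-cocycle with
  values in the dual of S_0. Composed with the boundary map it vanishes on the cycle (whose image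
  is a boundary by hypothesis) and on boundaries, while on the normal form it only sees the term
  at <z0, z1>. Indeed z0 is not \<Gamma>-equivalent to z1, and another representative pair with
  nontrivial stabilizer meets the orbit of z1 only if it is \<Gamma>-equivalent to {z0, z1}, because
  by discreteness a loxodromic and a parabolic element never share a fixed point. Hence
  |a| = 1, so u is elliptic, and discreteness together with torsion-freeness gives u = id.
\<close>

definition supp :: "('k \<Rightarrow> int) \<Rightarrow> 'k set" where
  "supp f = {k. f k \<noteq> 0}"

definition pairing :: "('k \<Rightarrow> int) \<Rightarrow> ('k \<Rightarrow> 'a::comm_ring_1) \<Rightarrow> 'a" where
  "pairing c W = (\<Sum>k\<in>supp c. of_int (c k) * W k)"

lemma supp_delta [simp]: "supp (delta x) = {x}"
  by (auto simp: supp_def delta_def)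

lemma supp_diff: "supp (\<lambda>k. c k - d k) \<subseteq> supp c \<union> supp d"
  and supp_add: "supp (\<lambda>k. c k + d k) \<subseteq> supp c \<union> supp d"
  and supp_scale: "supp (\<lambda>k. n * c k) \<subseteq> supp c"
  by (auto simp: supp_def)

lemma supp_zero [simp]: "supp (\<lambda>_. 0) = {}"
  by (simp add: supp_def)

lemma supp_sum: "supp (\<lambda>k. \<Sum>i\<in>I. f i k) \<subseteq> (\<Union>i\<in>I. supp (f i))"
  by (auto simp: supp_def dest: sum.not_neutral_contains_not_neutral)

lemma finite_supp_diff [simp]: "finite (supp c) \<Longrightarrow> finite (supp d) \<Longrightarrow> finite (supp (\<lambda>k. c k - d k))"
  and finite_supp_add [simp]: "finite (supp c) \<Longrightarrow> finite (supp d) \<Longrightarrow> finite (supp (\<lambda>k. c k + d k))"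
  and finite_supp_scale [simp]: "finite (supp c) \<Longrightarrow> finite (supp (\<lambda>k. n * c k))"
  by (auto intro: finite_subset[OF supp_diff] finite_subset[OF supp_add] finite_subset[OF supp_scale])

lemma finite_supp_sum [simp]:
  "finite I \<Longrightarrow> (\<And>i. i \<in> I \<Longrightarrow> finite (supp (f i))) \<Longrightarrow> finite (supp (\<lambda>k. \<Sum>i\<in>I. f i k))"
  by (rule finite_subset[OF supp_sum]) auto

lemma pairing_eq:
  assumes "finite S" "supp c \<subseteq> S"
  shows "pairing c W = (\<Sum>k\<in>S. of_int (c k) * W k)"
  unfolding pairing_def using assms by (intro sum.mono_neutral_left) (auto simp: supp_def)

lemma pairing_diff [simp]:
  assumes "finite (supp c)" "finite (supp d)"
  shows "pairing (\<lambda>k. c k - d k) W = pairing c W - pairing d W"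
proof -
  let ?S = "supp c \<union> supp d"
  have "pairing (\<lambda>k. c k - d k) W = (\<Sum>k\<in>?S. of_int (c k - d k) * W k)"
    using assms by (intro pairing_eq[OF _ supp_diff]) auto
  also have "\<dots> = pairing c W - pairing d W"
    using assms by (simp add: pairing_eq[of ?S] sum_subtractf left_diff_distrib)
  finally show ?thesis .
qed

lemma pairing_add [simp]:
  assumes "finite (supp c)" "finite (supp d)"
  shows "pairing (\<lambda>k. c k + d k) W = pairing c W + pairing d W"
proof -
  let ?S = "supp c \<union> supp d"
  have "pairing (\<lambda>k. c k + d k) W = (\<Sum>k\<in>?S. of_int (c k + d k) * W k)"
    using assms by (intro pairing_eq[OF _ supp_add]) auto
  also have "\<dots> = pairing c W + pairing d W"
    using assms by (simp add: pairing_eq[of ?S] sum.distrib distrib_right)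
  finally show ?thesis .
qed

lemma pairing_zero [simp]: "pairing (\<lambda>_. 0) W = 0"
  by (simp add: pairing_def supp_def)

lemma pairing_delta [simp]: "pairing (delta x) W = W x"
  unfolding pairing_def supp_delta by (simp add: delta_def)

lemma pairing_scale [simp]: "pairing (\<lambda>k. n * c k) W = of_int n * pairing c W"
proof (cases "n = 0")
  case False
  then have "supp (\<lambda>k. n * c k) = supp c" by (auto simp: supp_def)
  then show ?thesis by (simp add: pairing_def sum_distrib_left mult.assoc)
qed (simp add: pairing_def supp_def)

lemma pairing_sum:
  assumes "finite I" "\<And>i. i \<in> I \<Longrightarrow> finite (supp (f i))"
  shows "pairing (\<lambda>k. \<Sum>i\<in>I. f i k) W = (\<Sum>i\<in>I. pairing (f i) W)"
  using assms by (induction I rule: finite_induct) simp_all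

lemma pairing_eq_0: "(\<And>k. k \<in> supp c \<Longrightarrow> W k = 0) \<Longrightarrow> pairing c W = 0"
  by (simp add: pairing_def)

lemma chain_expansion:
  assumes "finite (supp c)"
  shows "c = (\<lambda>x. \<Sum>k\<in>supp c. c k * delta k x)"
proof
  fix x
  have "(\<Sum>k\<in>supp c. c k * delta k x) = (\<Sum>k\<in>supp c. if x = k then c k else 0)"
    by (intro sum.cong) (auto simp: delta_def)
  also have "\<dots> = c x"
    using assms by (simp add: sum.delta) (simp add: supp_def)
  finally show "c x = (\<Sum>k\<in>supp c. c k * delta k x)" ..
qed

lemma lin_eq_pairing: "lin \<phi> c = (\<lambda>l. pairing c (\<lambda>k. \<phi> k l))"
  by (simp add: lin_def pairing_def supp_def)

lemma lin_delta [simp]: "lin \<phi> (delta x) = \<phi> x"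
  by (simp add: lin_eq_pairing)

lemma lin_zero [simp]: "lin \<phi> (\<lambda>_. 0) = (\<lambda>_. 0)"
  by (simp add: lin_eq_pairing)

lemma lin_diff:
  "finite (supp c) \<Longrightarrow> finite (supp d) \<Longrightarrow> lin \<phi> (\<lambda>k. c k - d k) = (\<lambda>l. lin \<phi> c l - lin \<phi> d l)"
  by (simp add: lin_eq_pairing)

lemma supp_lin: "supp (lin \<phi> c) \<subseteq> (\<Union>k\<in>supp c. supp (\<phi> k))"
proof
  fix l assume "l \<in> supp (lin \<phi> c)"
  then have "(\<Sum>k\<in>supp c. c k * \<phi> k l) \<noteq> 0" by (simp add: supp_def lin_def)
  then obtain k where "k \<in> supp c" "c k * \<phi> k l \<noteq> 0"
    using sum.not_neutral_contains_not_neutral by blast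
  then show "l \<in> (\<Union>k\<in>supp c. supp (\<phi> k))" by (auto simp: supp_def)
qed

lemma finite_supp_lin:
  "finite (supp c) \<Longrightarrow> (\<And>k. k \<in> supp c \<Longrightarrow> finite (supp (\<phi> k))) \<Longrightarrow> finite (supp (lin \<phi> c))"
  by (rule finite_subset[OF supp_lin]) auto

lemma pairing_lin:
  assumes fc: "finite (supp c)" and f\<phi>: "\<And>k. k \<in> supp c \<Longrightarrow> finite (supp (\<phi> k))"
  shows "pairing (lin \<phi> c) W = pairing c (\<lambda>k. pairing (\<phi> k) W)"
proof -
  let ?T = "\<Union>k\<in>supp c. supp (\<phi> k)"
  have fT: "finite ?T" using fc f\<phi> by blast
  have "pairing (lin \<phi> c) W = (\<Sum>l\<in>?T. \<Sum>k\<in>supp c. of_int (c k) * (of_int (\<phi> k l) * W l))"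
    unfolding pairing_eq[OF fT supp_lin] by (simp add: lin_def supp_def sum_distrib_right mult.assoc)
  also have "\<dots> = (\<Sum>k\<in>supp c. of_int (c k) * (\<Sum>l\<in>?T. of_int (\<phi> k l) * W l))"
    by (subst sum.swap) (simp add: sum_distrib_left)
  also have "\<dots> = pairing c (\<lambda>k. pairing (\<phi> k) W)"
  proof -
    have "pairing (\<phi> k) W = (\<Sum>l\<in>?T. of_int (\<phi> k l) * W l)" if "k \<in> supp c" for k
      using that by (intro pairing_eq fT) auto
    then show ?thesis by (simp add: pairing_def[of c])
  qed
  finally show ?thesis .
qed

lemma lin_as_sum: "lin \<phi> c = (\<lambda>l. \<Sum>k\<in>supp c. c k * \<phi> k l)"
  by (simp add: lin_def supp_def)

lemma lin_lin:
  assumes "finite (supp c)" "\<And>k. finite (supp (\<phi> k))"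
  shows "lin \<psi> (lin \<phi> c) = lin (\<lambda>k. lin \<psi> (\<phi> k)) c"
proof
  fix l
  have "lin \<psi> (lin \<phi> c) l = pairing (lin \<phi> c) (\<lambda>k. \<psi> k l)" by (simp add: lin_eq_pairing)
  also have "\<dots> = pairing c (\<lambda>k. pairing (\<phi> k) (\<lambda>k'. \<psi> k' l))" using assms by (rule pairing_lin)
  also have "\<dots> = lin (\<lambda>k. lin \<psi> (\<phi> k)) c l" by (simp add: lin_eq_pairing)
  finally show "lin \<psi> (lin \<phi> c) l = lin (\<lambda>k. lin \<psi> (\<phi> k)) c l" .
qed

locale int_subgroup =
  fixes S :: "('k \<Rightarrow> int) set"
  assumes zero_mem: "(\<lambda>_. 0) \<in> S"
    and diff_mem: "x \<in> S \<Longrightarrow> y \<in> S \<Longrightarrow> (\<lambda>k. x k - y k) \<in> S"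
begin

lemma neg_mem: "x \<in> S \<Longrightarrow> (\<lambda>k. - x k) \<in> S"
  using diff_mem[OF zero_mem] by simp

lemma add_mem: "x \<in> S \<Longrightarrow> y \<in> S \<Longrightarrow> (\<lambda>k. x k + y k) \<in> S"
  using diff_mem[of x "\<lambda>k. - y k"] neg_mem[of y] by simp

lemma scale_mem: "x \<in> S \<Longrightarrow> (\<lambda>k. n * x k) \<in> S"
proof -
  have nat_scale: "(\<lambda>k. int m * x k) \<in> S" if "x \<in> S" for m
    by (induction m) (use zero_mem add_mem[OF that] in \<open>simp_all add: distrib_right\<close>)
  assume "x \<in> S"
  then show ?thesis
    using nat_scale[of "nat n"] neg_mem[OF nat_scale[of "nat (- n)"]] by (cases "n \<ge> 0") simp_all
qed

lemma sum_mem: "finite I \<Longrightarrow> (\<And>i. i \<in> I \<Longrightarrow> f i \<in> S) \<Longrightarrow> (\<lambda>k. \<Sum>i\<in>I. f i k) \<in> S"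
  by (induction I rule: finite_induct) (simp_all add: zero_mem add_mem)

end

interpretation zspan: int_subgroup "zspan B" for B
  by unfold_locales (fact zspan_zero, fact zspan_diff)

lemma supp_zspan: "x \<in> zspan B \<Longrightarrow> supp x \<subseteq> \<Union> (supp ` B)"
proof (induction rule: zspan.induct)
  case (zspan_diff x y)
  then show ?case using supp_diff[of x y] by blast
qed auto

lemma finite_supp_zspan: "x \<in> zspan B \<Longrightarrow> (\<And>b. b \<in> B \<Longrightarrow> finite (supp b)) \<Longrightarrow> finite (supp x)"
  by (induction rule: zspan.induct) simp_all

lemma pairing_zspan_eq_0:
  assumes "x \<in> zspan B" "\<And>b. b \<in> B \<Longrightarrow> finite (supp b)" "\<And>b. b \<in> B \<Longrightarrow> pairing b W = 0"
  shows "pairing x W = 0"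
  using assms(1) by induction (use assms finite_supp_zspan[of _ B] in auto)

lemma zspan_UN_decompose:
  assumes "x \<in> zspan (\<Union>i\<in>I. B i)"
  shows "\<exists>J w. finite J \<and> J \<subseteq> I \<and> (\<forall>j\<in>J. w j \<in> zspan (B j)) \<and> x = (\<lambda>k. \<Sum>j\<in>J. w j k)"
  using assms
proof induction
  case zspan_zero
  show ?case by (intro exI[of _ "{}"]) auto
next
  case (zspan_base b)
  then obtain i where "i \<in> I" "b \<in> B i" by blast
  then show ?case by (intro exI[of _ "{i}"] exI[of _ "\<lambda>_. b"]) (auto intro: zspan.zspan_base)
next
  case (zspan_diff x y)
  obtain J1 w1 where 1: "finite J1" "J1 \<subseteq> I" "\<forall>j\<in>J1. w1 j \<in> zspan (B j)" "x = (\<lambda>k. \<Sum>j\<in>J1. w1 j k)"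
    using zspan_diff.IH(1) by blast
  obtain J2 w2 where 2: "finite J2" "J2 \<subseteq> I" "\<forall>j\<in>J2. w2 j \<in> zspan (B j)" "y = (\<lambda>k. \<Sum>j\<in>J2. w2 j k)"
    using zspan_diff.IH(2) by blast
  define w where
    "w j = (\<lambda>k. (if j \<in> J1 then w1 j k else 0) - (if j \<in> J2 then w2 j k else 0))" for j
  have restrict: "(\<Sum>j\<in>J1 \<union> J2. if j \<in> J then f j else 0) = sum f J"
    if "J \<subseteq> J1 \<union> J2" for J and f :: "_ \<Rightarrow> int"
    using that 1(1) 2(1) by (simp add: sum.inter_restrict[symmetric] Int_absorb1)
  have "(\<lambda>k. x k - y k) = (\<lambda>k. \<Sum>j\<in>J1 \<union> J2. w j k)"
    unfolding 1(4) 2(4) w_def by (simp only: sum_subtractf restrict Un_upper1 Un_upper2)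
  moreover have "w j \<in> zspan (B j)" if "j \<in> J1 \<union> J2" for j
    using 1(3) 2(3) that unfolding w_def
    by (cases "j \<in> J1"; cases "j \<in> J2") (auto intro: zspan.diff_mem zspan.neg_mem)
  ultimately show ?case using 1 2 by (intro exI[of _ "J1 \<union> J2"] exI[of _ w]) auto
qed

section \<open>Moebius transformations\<close>

definition mat2 :: "complex \<Rightarrow> complex \<Rightarrow> complex \<Rightarrow> complex \<Rightarrow> complex^2^2" where
  "mat2 a b c d = vector [vector [a, b], vector [c, d]]"

lemma mat2_nth [simp]:
  "mat2 a b c d $ 1 $ 1 = a" "mat2 a b c d $ 1 $ 2 = b"
  "mat2 a b c d $ 2 $ 1 = c" "mat2 a b c d $ 2 $ 2 = d"
  by (simp_all add: mat2_def)

lemma mat2_eta: "A = mat2 (A$1$1) (A$1$2) (A$2$1) (A$2$2)"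
  by (simp add: vec_eq_iff forall_2)

lemma mat2_eq_iff: "mat2 a b c d = mat2 a' b' c' d' \<longleftrightarrow> a = a' \<and> b = b' \<and> c = c' \<and> d = d'"
  by (metis mat2_nth)

lemma mat2_mult: "mat2 a b c d ** mat2 e f g h = mat2 (a*e+b*g) (a*f+b*h) (c*e+d*g) (c*f+d*h)"
  by (simp add: vec_eq_iff forall_2 matrix_matrix_mult_def sum_2)

lemma det_mat2: "det (mat2 a b c d) = a*d - b*c"
  by (simp add: det_2)

lemma mat_1_eq_mat2: "(mat 1 :: complex^2^2) = mat2 1 0 0 1"
  by (simp add: vec_eq_iff forall_2 mat_def)

lemma tendsto_mat2:
  assumes "(a \<longlongrightarrow> a0) F" "(b \<longlongrightarrow> b0) F" "(c \<longlongrightarrow> c0) F" "(d \<longlongrightarrow> d0) F"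
  shows "((\<lambda>n. mat2 (a n) (b n) (c n) (d n)) \<longlongrightarrow> mat2 a0 b0 c0 d0) F"
proof (intro vec_tendstoI)
  fix i j :: 2
  show "((\<lambda>n. mat2 (a n) (b n) (c n) (d n) $ i $ j) \<longlongrightarrow> mat2 a0 b0 c0 d0 $ i $ j) F"
    using assms exhaust_2[of i] exhaust_2[of j] by auto
qed

lemma tendsto_matrix_conj:
  fixes X :: "'b \<Rightarrow> complex^2^2"
  assumes "(X \<longlongrightarrow> X0) F"
  shows "((\<lambda>n. M ** X n ** N) \<longlongrightarrow> M ** X0 ** N) F"
proof (intro vec_tendstoI)
  fix i j
  have "\<And>k l. ((\<lambda>n. X n $ k $ l) \<longlongrightarrow> X0 $ k $ l) F"
    by (intro tendsto_vec_nth assms)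
  then show "((\<lambda>n. (M ** X n ** N) $ i $ j) \<longlongrightarrow> (M ** X0 ** N) $ i $ j) F"
    unfolding matrix_matrix_mult_def vec_lambda_beta
    by (intro tendsto_sum tendsto_mult_right tendsto_mult_left)
qed

lemma matrix_inv_mult:
  fixes A :: "complex^2^2"
  assumes "det A \<noteq> 0"
  shows "A ** matrix_inv A = mat 1" "matrix_inv A ** A = mat 1"
  using someI_ex[OF assms[folded invertible_det_nz, unfolded invertible_def]]
  by (simp_all add: matrix_inv_def)

lemma det_matrix_inv_nonzero:
  fixes A :: "complex^2^2"
  shows "det A \<noteq> 0 \<Longrightarrow> det (matrix_inv A) \<noteq> 0"
  using det_mul[of A "matrix_inv A"] matrix_inv_mult(1)[of A] by auto

definition mobius :: "complex \<Rightarrow> complex \<Rightarrow> complex \<Rightarrow> complex \<Rightarrow> pt \<Rightarrow> pt" where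
  "mobius a b c d p = (case p of
        None \<Rightarrow> (if c = 0 then None else Some (a / c))
      | Some z \<Rightarrow> (if c * z + d = 0 then None else Some ((a * z + b) / (c * z + d))))"

lemma moeb_mat2: "moeb (mat2 a b c d) = mobius a b c d"
  by (simp add: moeb_def mobius_def fun_eq_iff)

lemma mobius_None: "mobius a b c d None = (if c = 0 then None else Some (a / c))"
  and mobius_Some: "mobius a b c d (Some z) = (if c * z + d = 0 then None else Some ((a * z + b) / (c * z + d)))"
  by (simp_all add: mobius_def)

lemma mobius_comp:
  assumes "e*h - f*g \<noteq> 0"
  shows "mobius a b c d \<circ> mobius e f g h = mobius (a*e+b*g) (a*f+b*h) (c*e+d*g) (c*f+d*h)"
proof
  fix p
  show "(mobius a b c d \<circ> mobius e f g h) p = mobius (a*e+b*g) (a*f+b*h) (c*e+d*g) (c*f+d*h) p"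
  proof (cases p)
    case None
    show ?thesis
    proof (cases "g = 0")
      case True
      then have "e \<noteq> 0" "h \<noteq> 0" using assms by auto
      then show ?thesis using None True by (auto simp: mobius_None)
    next
      case False
      have "c * e / g + d = (c*e+d*g)/g" "a * e / g + b = (a*e+b*g)/g"
        using False by (simp_all add: field_simps)
      then show ?thesis using None False by (auto simp: mobius_None mobius_Some)
    qed
  next
    case (Some z)
    show ?thesis
    proof (cases "g*z+h = 0")
      case True
      then have h: "h = - g*z" by algebra
      have "e*h - f*g = -g*(e*z+f)" unfolding h by algebra
      then have "e*z+f \<noteq> 0" using assms by auto
      moreover have "(c*e+d*g)*z + (c*f+d*h) = c*(e*z+f)" "(a*e+b*g)*z + (a*f+b*h) = a*(e*z+f)"
        unfolding h by (simp_all add: algebra_simps)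
      ultimately show ?thesis using Some True by (auto simp: mobius_None mobius_Some)
    next
      case False
      have "c * (e * z + f) / (g * z + h) + d = ((c*e+d*g)*z + (c*f+d*h)) / (g*z+h)"
        "a * (e * z + f) / (g * z + h) + b = ((a*e+b*g)*z + (a*f+b*h)) / (g*z+h)"
        using False by (simp_all add: field_simps)
      then show ?thesis using Some False by (auto simp: mobius_Some)
    qed
  qed
qed

lemma moeb_mult:
  assumes "det B \<noteq> 0"
  shows "moeb (A ** B) = moeb A \<circ> moeb B"
proof -
  obtain a b c d where A: "A = mat2 a b c d" using mat2_eta by blast
  obtain e f g h where B: "B = mat2 e f g h" using mat2_eta by blast
  show ?thesis using assms unfolding A B mat2_mult moeb_mat2 det_mat2 by (simp add: mobius_comp)
qed

lemma moeb_mat_1: "moeb (mat 1) = id"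
  by (auto simp: mat_1_eq_mat2 moeb_mat2 mobius_def fun_eq_iff split: option.splits)

lemma moeb_matrix_inv:
  assumes "det A \<noteq> 0"
  shows "moeb (matrix_inv A) \<circ> moeb A = id" "moeb A \<circ> moeb (matrix_inv A) = id"
  using moeb_mult[OF assms, of "matrix_inv A"] moeb_mult[OF det_matrix_inv_nonzero[OF assms], of A]
  by (simp_all add: matrix_inv_mult[OF assms] moeb_mat_1)

lemma PGL2_bij: "g \<in> PGL2 \<Longrightarrow> bij g"
  unfolding PGL2_def by (auto intro: o_bij moeb_matrix_inv)

lemma PGL2_inv:
  assumes "g \<in> PGL2"
  shows "inv g \<in> PGL2"
proof -
  obtain A where A: "det A \<noteq> 0" "g = moeb A" using assms unfolding PGL2_def by blast
  then have "inv g = moeb (matrix_inv A)" using moeb_matrix_inv inv_unique_comp by metis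
  then show ?thesis using det_matrix_inv_nonzero[OF A(1)] unfolding PGL2_def by blast
qed

lemma PGL2_comp:
  assumes "g \<in> PGL2" "h \<in> PGL2"
  shows "g \<circ> h \<in> PGL2"
proof -
  obtain A B where "det A \<noteq> 0" "g = moeb A" "det B \<noteq> 0" "h = moeb B"
    using assms unfolding PGL2_def by blast
  then have "det (A ** B) \<noteq> 0" "g \<circ> h = moeb (A ** B)" by (simp_all add: det_mul moeb_mult)
  then show ?thesis unfolding PGL2_def by blast
qed

definition affm :: "complex \<Rightarrow> complex \<Rightarrow> pt \<Rightarrow> pt" where
  "affm a b = map_option (\<lambda>z. a * z + b)"

lemma affm_None [simp]: "affm a b None = None"
  and affm_Some [simp]: "affm a b (Some z) = Some (a * z + b)"
  by (simp_all add: affm_def)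

lemma affm_comp: "affm a b \<circ> affm c d = affm (a*c) (a*d+b)"
  by (auto simp: affm_def fun_eq_iff option.map_comp o_def algebra_simps)

lemma affm_id: "affm 1 0 = id"
  by (auto simp: affm_def fun_eq_iff option.map_ident)

lemma affm_pow: "affm a 0 ^^ n = affm (a^n) 0"
  by (induction n) (simp_all add: affm_id affm_comp mult.commute)

lemma mobius_affm: "d \<noteq> 0 \<Longrightarrow> mobius a b 0 d = affm (a/d) (b/d)"
  by (auto simp: mobius_def fun_eq_iff add_divide_distrib split: option.splits)

lemma PGL2_mobius:
  assumes "g \<in> PGL2"
  obtains a b c d where "g = mobius a b c d" "a*d - b*c \<noteq> 0"
proof -
  obtain A where "det A \<noteq> 0" "g = moeb A" using assms unfolding PGL2_def by blast
  then show ?thesis using that mat2_eta[of A] by (metis det_mat2 moeb_mat2)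
qed

lemma PGL2_fix_infinity:
  assumes "g \<in> PGL2" "g None = None"
  shows "\<exists>\<alpha> \<beta>. \<alpha> \<noteq> 0 \<and> g = affm \<alpha> \<beta>"
proof -
  obtain a b c d where g: "g = mobius a b c d" "a*d - b*c \<noteq> 0"
    using PGL2_mobius[OF assms(1)] .
  have "c = 0" using assms(2) unfolding g mobius_None by (auto split: if_splits)
  with g have "a \<noteq> 0" "d \<noteq> 0" "g = affm (a/d) (b/d)" by (auto simp: mobius_affm)
  then show ?thesis by (intro exI[of _ "a/d"] exI[of _ "b/d"]) simp
qed

text \<open>For an affine map this is the linear coefficient; on other maps the value is junk.\<close>

definition multiplier :: "(pt \<Rightarrow> pt) \<Rightarrow> complex" where
  "multiplier f = the (f (Some 1)) - the (f (Some 0))"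

lemma multiplier_affm [simp]: "multiplier (affm a b) = a"
  by (simp add: multiplier_def)

lemma multiplier_id [simp]: "multiplier id = 1"
  by (simp add: multiplier_def)

definition pair_chart :: "pt \<Rightarrow> pt \<Rightarrow> complex^2^2" where
  "pair_chart z0 z1 = (case z1 of
       None \<Rightarrow> mat2 1 (the z0) 0 1
     | Some u \<Rightarrow> (case z0 of None \<Rightarrow> mat2 u (-1) 1 0 | Some w \<Rightarrow> mat2 u w 1 1))"

lemma pair_chart:
  assumes "z0 \<noteq> z1"
  shows "det (pair_chart z0 z1) \<noteq> 0" "moeb (pair_chart z0 z1) None = z1"
    "moeb (pair_chart z0 z1) (Some 0) = z0"
  using assms by (auto simp: pair_chart_def moeb_mat2 det_mat2 mobius_def split: option.splits)

definition pair_conj :: "pt \<Rightarrow> pt \<Rightarrow> (pt \<Rightarrow> pt) \<Rightarrow> (pt \<Rightarrow> pt)" where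
  "pair_conj z0 z1 f = inv (moeb (pair_chart z0 z1)) \<circ> f \<circ> moeb (pair_chart z0 z1)"

lemma inv_affm: "\<alpha> \<noteq> 0 \<Longrightarrow> inv (affm \<alpha> \<beta>) = affm (1/\<alpha>) (-\<beta>/\<alpha>)"
  by (rule inv_unique_comp) (simp_all add: affm_comp affm_id field_simps)

context
  fixes z0 z1 :: pt
  assumes z01: "z0 \<noteq> z1"
begin

abbreviation (input) chart where "chart \<equiv> moeb (pair_chart z0 z1)"

lemma chart_PGL2: "chart \<in> PGL2"
  using pair_chart(1)[OF z01] unfolding PGL2_def by blast

lemma chart_inv_simps [simp]: "chart (inv chart x) = x" "inv chart (chart x) = x"
  using PGL2_bij[OF chart_PGL2] by (simp_all add: bij_is_inj bij_is_surj surj_f_inv_f)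

lemma chart_inv_z1: "inv chart z1 = None"
  and chart_inv_z0: "inv chart z0 = Some 0"
  using pair_chart[OF z01] by (metis chart_inv_simps(2))+

lemma chart_inv_eq_iff: "inv chart x = inv chart y \<longleftrightarrow> x = y"
  by (metis chart_inv_simps(1))

lemma pair_conj_apply: "pair_conj z0 z1 f (inv chart w) = inv chart (f w)"
  by (simp add: pair_conj_def)

lemma pair_conj_comp: "pair_conj z0 z1 (f \<circ> g) = pair_conj z0 z1 f \<circ> pair_conj z0 z1 g"
  and pair_conj_id: "pair_conj z0 z1 id = id"
  by (simp_all add: pair_conj_def fun_eq_iff)

lemma pair_conj_pow: "pair_conj z0 z1 (f ^^ n) = pair_conj z0 z1 f ^^ n"
proof (induction n)
  case (Suc n)
  then show ?case by (simp only: funpow.simps(2) pair_conj_comp)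
qed (simp only: funpow.simps(1) pair_conj_id)

lemma pair_conj_eq_id: "pair_conj z0 z1 f = id \<longleftrightarrow> f = id"
proof
  assume "pair_conj z0 z1 f = id"
  then have "chart \<circ> pair_conj z0 z1 f \<circ> inv chart = id" by (simp add: fun_eq_iff)
  then show "f = id" by (simp add: pair_conj_def fun_eq_iff)
qed (simp add: pair_conj_id)

lemma pair_conj_inv:
  assumes "bij f"
  shows "pair_conj z0 z1 (inv f) = inv (pair_conj z0 z1 f)"
proof -
  have "f \<circ> inv f = id" "inv f \<circ> f = id"
    using assms bij_is_surj bij_is_inj surj_iff inj_iff by metis+
  then show ?thesis
    by (intro inv_unique_comp[symmetric]) (simp_all add: pair_conj_id flip: pair_conj_comp)
qed

lemma pair_conj_PGL2: "f \<in> PGL2 \<Longrightarrow> pair_conj z0 z1 f \<in> PGL2"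
  unfolding pair_conj_def using chart_PGL2 by (intro PGL2_comp PGL2_inv)

lemma pair_conj_fix_z1:
  assumes "g \<in> PGL2" "g z1 = z1"
  shows "\<exists>\<alpha> \<beta>. \<alpha> \<noteq> 0 \<and> pair_conj z0 z1 g = affm \<alpha> \<beta>"
  using PGL2_fix_infinity[OF pair_conj_PGL2[OF assms(1)]] assms(2) pair_chart(2)[OF z01]
  by (simp add: pair_conj_def chart_inv_z1)

lemma fix_z0_iff: "g z0 = z0 \<longleftrightarrow> pair_conj z0 z1 g (Some 0) = Some 0"
  using chart_inv_eq_iff[of "g z0" z0] pair_chart(3)[OF z01] by (simp add: pair_conj_def chart_inv_z0)

lemma pair_conj_fix_both:
  assumes "g \<in> PGL2" "g z1 = z1" "g z0 = z0"
  shows "\<exists>\<alpha>. \<alpha> \<noteq> 0 \<and> pair_conj z0 z1 g = affm \<alpha> 0"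
  using pair_conj_fix_z1[OF assms(1,2)] assms(3) by (auto simp: fix_z0_iff)

lemma multiplier_pair_conj_comp:
  assumes "g \<in> PGL2" "g z1 = z1" "h \<in> PGL2" "h z1 = z1"
  shows "multiplier (pair_conj z0 z1 (g \<circ> h)) =
    multiplier (pair_conj z0 z1 g) * multiplier (pair_conj z0 z1 h)"
  using pair_conj_fix_z1[OF assms(1,2)] pair_conj_fix_z1[OF assms(3,4)]
  by (auto simp: pair_conj_comp affm_comp)

lemma multiplier_pair_conj_nonzero:
  "g \<in> PGL2 \<Longrightarrow> g z1 = z1 \<Longrightarrow> multiplier (pair_conj z0 z1 g) \<noteq> 0"
  using pair_conj_fix_z1 by fastforce

lemma PGL2_fix_three_points:
  assumes "g \<in> PGL2" "g z0 = z0" "g z1 = z1" "g w = w" "w \<noteq> z0" "w \<noteq> z1"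
  shows "g = id"
proof -
  obtain a where a: "pair_conj z0 z1 g = affm a 0" using pair_conj_fix_both assms(1-3) by blast
  obtain x where x: "inv chart w = Some x" "x \<noteq> 0"
    using assms(5,6) chart_inv_eq_iff chart_inv_z0 chart_inv_z1 by (metis not_Some_eq)
  have "Some (a * x) = Some x" using pair_conj_apply[of g w] a x assms(4) by simp
  then have "a = 1" using x(2) by simp
  then show "g = id" using a pair_conj_eq_id by (simp add: affm_id)
qed

lemma PGL2_swap_involution:
  assumes "g \<in> PGL2" "g z0 = z1" "g z1 = z0"
  shows "g \<circ> g = id"
proof -
  obtain a b c d where abcd: "pair_conj z0 z1 g = mobius a b c d" "a*d - b*c \<noteq> 0"
    using PGL2_mobius[OF pair_conj_PGL2[OF assms(1)]] .
  have "pair_conj z0 z1 g None = Some 0" "pair_conj z0 z1 g (Some 0) = None"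
    using assms pair_chart[OF z01] by (simp_all add: pair_conj_def chart_inv_z0 chart_inv_z1)
  then have "a = 0" "d = 0" "c \<noteq> 0" using abcd by (auto simp: mobius_def split: if_splits)
  then have "pair_conj z0 z1 (g \<circ> g) = mobius (0*0+b*c) (0*b+b*0) (c*0+0*c) (c*b+0*0)"
    using abcd by (simp add: pair_conj_comp mobius_comp)
  also have "\<dots> = id" using abcd \<open>a = 0\<close> by (simp add: mobius_affm mult.commute affm_id)
  finally show ?thesis using pair_conj_eq_id by blast
qed

end

lemma unimodular_powers_return:
  fixes \<nu> :: complex
  assumes "norm \<nu> = 1"
  shows "\<exists>m. (\<forall>k. 0 < m k) \<and> (\<lambda>k. \<nu> ^ m k) \<longlonglongrightarrow> 1"
proof -
  have npow: "norm (\<nu> ^ n) = 1" for n by (simp add: norm_power assms)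
  then have "bounded (range (\<lambda>n. \<nu> ^ n))" unfolding bounded_iff by auto
  then obtain l r where r: "strict_mono (r :: nat \<Rightarrow> nat)" and "((\<lambda>n. \<nu> ^ n) \<circ> r) \<longlonglongrightarrow> l"
    using bounded_imp_convergent_subsequence by blast
  then have lim: "(\<lambda>k. \<nu> ^ r k) \<longlonglongrightarrow> l" by (simp add: o_def)
  have "(\<lambda>k. norm (\<nu> ^ r k)) \<longlonglongrightarrow> norm l" by (rule tendsto_norm[OF lim])
  then have l0: "l \<noteq> 0" using npow LIMSEQ_unique[OF _ tendsto_const] by fastforce
  define m where "m k = r (Suc k) - r k" for k
  have "\<nu> ^ m k = \<nu> ^ r (Suc k) / \<nu> ^ r k" for k
    unfolding m_def using assms by (subst power_diff) (auto simp: strict_mono_less_eq[OF r])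
  moreover have "(\<lambda>k. \<nu> ^ r (Suc k) / \<nu> ^ r k) \<longlonglongrightarrow> l / l"
    using LIMSEQ_Suc[OF lim] lim l0 by (intro tendsto_divide)
  ultimately have "(\<lambda>k. \<nu> ^ m k) \<longlonglongrightarrow> 1" using l0 by simp
  moreover have "0 < m k" for k unfolding m_def using r by (simp add: strict_mono_def)
  ultimately show ?thesis by blast
qed

locale torsion_free_kleinian =
  fixes \<Gamma> :: "(pt \<Rightarrow> pt) set"
  assumes kleinian: "kleinian \<Gamma>" and torsion_free: "torsion_free \<Gamma>"
begin

lemma subgroup: "is_subgroup_PGL2 \<Gamma>"
  using kleinian by (simp add: kleinian_def)

lemma id_in [simp]: "id \<in> \<Gamma>"
  and comp_in [intro]: "g \<in> \<Gamma> \<Longrightarrow> h \<in> \<Gamma> \<Longrightarrow> g \<circ> h \<in> \<Gamma>"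
  and inv_in [intro]: "g \<in> \<Gamma> \<Longrightarrow> inv g \<in> \<Gamma>"
  and in_PGL2: "g \<in> \<Gamma> \<Longrightarrow> g \<in> PGL2"
  using subgroup by (auto simp: is_subgroup_PGL2_def)

lemma pow_in: "g \<in> \<Gamma> \<Longrightarrow> g ^^ n \<in> \<Gamma>"
  by (induction n) auto

lemma inv_apply [simp]: "g \<in> \<Gamma> \<Longrightarrow> inv g (g x) = x"
  and apply_inv [simp]: "g \<in> \<Gamma> \<Longrightarrow> g (inv g x) = x"
  using PGL2_bij[OF in_PGL2] by (simp_all add: bij_is_inj bij_is_surj surj_f_inv_f)

lemma inv_comp_self [simp]: "g \<in> \<Gamma> \<Longrightarrow> inv g \<circ> g = id"
  and comp_inv_self [simp]: "g \<in> \<Gamma> \<Longrightarrow> g \<circ> inv g = id"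
  by (simp_all add: fun_eq_iff)

lemma apply_eq_iff: "g \<in> \<Gamma> \<Longrightarrow> g x = g y \<longleftrightarrow> x = y"
  by (metis inv_apply)

lemma inv_apply_eq_iff: "g \<in> \<Gamma> \<Longrightarrow> inv g x = y \<longleftrightarrow> x = g y"
  by (metis inv_apply apply_inv)

lemma map_inv_map [simp]: "g \<in> \<Gamma> \<Longrightarrow> map (inv g) (map g m) = m"
  and map_map_inv [simp]: "g \<in> \<Gamma> \<Longrightarrow> map g (map (inv g) m) = m"
  by (induction m) auto

lemma inv_comp: "g \<in> \<Gamma> \<Longrightarrow> h \<in> \<Gamma> \<Longrightarrow> inv (g \<circ> h) = inv h \<circ> inv g"
  by (simp add: PGL2_bij in_PGL2 o_inv_distrib)

lemma involution_trivial:
  assumes "g \<in> \<Gamma>" "g \<circ> g = id"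
  shows "g = id"
proof -
  have "g ^^ 2 = id" using assms(2) by (simp add: numeral_2_eq_2)
  moreover have "(2::nat) > 0" by simp
  ultimately show ?thesis using torsion_free assms(1) unfolding torsion_free_def by blast
qed

lemma discrete_conj_seq:
  assumes M: "det M \<noteq> 0" and lim: "X \<longlonglongrightarrow> mat 1" and det1: "\<And>n. det (X n) = 1"
    and in_\<Gamma>: "\<And>n. moeb M \<circ> moeb (X n) \<circ> inv (moeb M) \<in> \<Gamma>"
  shows "\<exists>n. X n = mat 1"
proof -
  define P where "P = (\<Union>g\<in>\<Gamma>. sl_reps g)"
  have "mat 1 \<in> P" unfolding P_def sl_reps_def using moeb_mat_1 id_in by force
  then obtain e where e: "e > 0" "\<And>B. B \<in> P \<Longrightarrow> B \<noteq> mat 1 \<Longrightarrow> e \<le> dist (mat 1) B"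
    using kleinian unfolding kleinian_def discrete_PGL2_def P_def Let_def by blast
  define B where "B n = M ** X n ** matrix_inv M" for n
  have inv_M: "inv (moeb M) = moeb (matrix_inv M)"
    using moeb_matrix_inv[OF M] inv_unique_comp by blast
  have det_inv_M: "det M * det (matrix_inv M) = 1"
    using matrix_inv_mult(1)[OF M] by (metis det_I det_mul)
  have "B n \<in> P" for n
  proof -
    have "det (B n) = det (X n) * (det M * det (matrix_inv M))"
      by (simp add: B_def det_mul)
    then have "det (B n) = 1" using det1 det_inv_M by simp
    moreover have "moeb (B n) = moeb M \<circ> moeb (X n) \<circ> inv (moeb M)"
      using det1[of n] det_matrix_inv_nonzero[OF M]
      by (simp add: B_def inv_M moeb_mult)
    ultimately show ?thesis unfolding P_def sl_reps_def using in_\<Gamma>[of n] by force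
  qed
  moreover have "B \<longlonglongrightarrow> mat 1"
    using tendsto_matrix_conj[OF lim, of M "matrix_inv M"] matrix_inv_mult[OF M]
    by (simp add: B_def[abs_def])
  then have "\<forall>\<^sub>F n in sequentially. dist (B n) (mat 1) < e" using e(1) tendstoD by blast
  then obtain n where "dist (B n) (mat 1) < e" using eventually_sequentially by auto
  ultimately have "B n = mat 1" using e(2) by (force simp: dist_commute)
  then have "matrix_inv M ** B n ** M = mat 1" using matrix_inv_mult[OF M] by simp
  moreover have "matrix_inv M ** B n ** M = X n"
    using matrix_inv_mult[OF M] by (simp add: B_def matrix_mul_assoc flip: matrix_mul_assoc[of "X n"])
  ultimately show ?thesis by auto
qed

context
  fixes z0 z1 :: pt
  assumes z01: "z0 \<noteq> z1"
begin

lemma discrete_pair_conj: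
  assumes "X \<longlonglongrightarrow> mat 1" "\<And>n. det (X n) = 1"
    and "\<And>n. k n \<in> \<Gamma>" "\<And>n. pair_conj z0 z1 (k n) = moeb (X n)"
  shows "\<exists>n. X n = mat 1"
proof (rule discrete_conj_seq[OF pair_chart(1)[OF z01] assms(1,2)])
  fix n
  have "moeb (pair_chart z0 z1) \<circ> moeb (X n) \<circ> inv (moeb (pair_chart z0 z1)) = k n"
    unfolding assms(4)[symmetric] pair_conj_def by (simp add: fun_eq_iff chart_inv_simps[OF z01])
  then show "moeb (pair_chart z0 z1) \<circ> moeb (X n) \<circ> inv (moeb (pair_chart z0 z1)) \<in> \<Gamma>"
    using assms(3) by simp
qed

text \<open>The diagonal matrices below, built from a square root of a, lift to SL(2) a sequence
  of powers of u tending to the identity.\<close>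

lemma unimodular_multiplier_trivial:
  assumes u: "u \<in> \<Gamma>" and cu: "pair_conj z0 z1 u = affm a 0" and a: "norm a = 1"
  shows "u = id"
proof -
  define \<nu> where "\<nu> = csqrt a"
  have \<nu>2: "\<nu>^2 = a" by (simp add: \<nu>_def)
  have "norm \<nu> ^ 2 = 1" using a \<nu>2 by (metis norm_power)
  then have "norm \<nu> = 1 \<or> norm \<nu> = -1" by (simp add: power2_eq_1_iff)
  then have "norm \<nu> = 1" using norm_ge_zero[of \<nu>] by linarith
  then obtain m where m: "\<And>k. 0 < m k" "(\<lambda>k. \<nu> ^ m k) \<longlonglongrightarrow> 1"
    using unimodular_powers_return by blast
  have \<nu>0: "\<nu> \<noteq> 0" using \<open>norm \<nu> = 1\<close> by auto
  define X where "X k = mat2 (\<nu> ^ m k) 0 0 (1 / \<nu> ^ m k)" for k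
  have "X \<longlonglongrightarrow> mat2 1 0 0 (1/1)"
    unfolding X_def[abs_def] by (intro tendsto_mat2 tendsto_const m(2) tendsto_divide) auto
  then have lim: "X \<longlonglongrightarrow> mat 1" by (simp add: mat_1_eq_mat2)
  have det: "det (X k) = 1" for k using \<nu>0 by (simp add: X_def det_mat2)
  have conj: "pair_conj z0 z1 (u ^^ m k) = moeb (X k)" for k
  proof -
    have "\<nu> ^ m k / (1 / \<nu> ^ m k) = a ^ m k"
      by (simp flip: \<nu>2 add: power2_eq_square power_mult_distrib)
    then show ?thesis using \<nu>0 by (simp add: X_def moeb_mat2 mobius_affm pair_conj_pow[OF z01] cu affm_pow)
  qed
  obtain k where "X k = mat 1" using discrete_pair_conj[OF lim det pow_in[OF u] conj] by blast
  then have "\<nu> ^ m k = 1" by (simp add: X_def mat_1_eq_mat2 mat2_eq_iff)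
  moreover have "a ^ m k = (\<nu> ^ m k)^2"
    unfolding \<nu>2[symmetric] by (simp only: power_mult[symmetric] mult.commute)
  ultimately have "a ^ m k = 1" by simp
  then have "pair_conj z0 z1 (u ^^ m k) = id" by (simp add: pair_conj_pow[OF z01] cu affm_pow affm_id)
  then have "u ^^ m k = id" using pair_conj_eq_id[OF z01] by simp
  then show "u = id" using torsion_free u m(1) unfolding torsion_free_def by blast
qed

lemma no_swap:
  assumes "g \<in> \<Gamma>" "g z0 = z1" "g z1 = z0"
  shows False
proof -
  have "g = id"
    using involution_trivial[OF assms(1) PGL2_swap_involution[OF z01 in_PGL2[OF assms(1)] assms(2,3)]] .
  then show False using assms(2) z01 by simp
qed

text \<open>Discreteness forbids a loxodromic and a parabolic element with a common fixed point:
  conjugating the commutator of g and h by powers of h contracts its translation part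
  towards 0.\<close>

lemma translation_part_vanishes:
  assumes h: "h \<in> \<Gamma>" "pair_conj z0 z1 h = affm a 0" "norm a < 1" "a \<noteq> 0"
    and g: "g \<in> \<Gamma>" "pair_conj z0 z1 g = affm \<alpha> \<beta>" "\<alpha> \<noteq> 0"
  shows "\<beta> = 0"
proof -
  let ?cj = "pair_conj z0 z1"
  have inv_conj: "?cj (inv f) = inv (?cj f)" if "f \<in> \<Gamma>" for f
    using pair_conj_inv[OF z01 PGL2_bij[OF in_PGL2[OF that]]] .
  define c where "c = g \<circ> h \<circ> inv g \<circ> inv h"
  define \<tau> where "\<tau> = \<beta> * (1 - a)"
  have "?cj c = affm \<alpha> \<beta> \<circ> affm a 0 \<circ> affm (1/\<alpha>) (-\<beta>/\<alpha>) \<circ> affm (1/a) 0"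
    unfolding c_def using h g by (simp add: pair_conj_comp[OF z01] inv_conj inv_affm)
  also have "\<dots> = affm 1 \<tau>"
    unfolding \<tau>_def using h g by (simp add: affm_comp field_simps)
  finally have cc: "?cj c = affm 1 \<tau>" .
  define k where "k n = h ^^ n \<circ> c \<circ> inv h ^^ n" for n
  have "?cj (k n) = affm (a^n) 0 \<circ> affm 1 \<tau> \<circ> affm ((1/a)^n) 0" for n
    unfolding k_def using h by (simp add: pair_conj_comp[OF z01] pair_conj_pow[OF z01] inv_conj inv_affm cc affm_pow)
  also have "\<dots> n = affm 1 (a^n * \<tau>)" for n
    using h by (simp add: affm_comp power_one_over field_simps)
  finally have ck: "?cj (k n) = affm 1 (a^n * \<tau>)" for n .
  define X where "X n = mat2 1 (a^n * \<tau>) 0 1" for n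
  have "X \<longlonglongrightarrow> mat2 1 (0 * \<tau>) 0 1"
    unfolding X_def[abs_def] by (intro tendsto_mat2 tendsto_const tendsto_mult LIMSEQ_power_zero h(3))
  then have lim: "X \<longlonglongrightarrow> mat 1" by (simp add: mat_1_eq_mat2)
  have det: "det (X n) = 1" for n by (simp add: X_def det_mat2)
  have k_in: "k n \<in> \<Gamma>" for n unfolding k_def c_def using h g by (intro comp_in pow_in inv_in)
  have conj: "?cj (k n) = moeb (X n)" for n by (simp add: X_def moeb_mat2 ck mobius_affm)
  obtain n where "X n = mat 1" using discrete_pair_conj[OF lim det k_in conj] by blast
  then have "a^n * \<tau> = 0" by (simp add: X_def mat_1_eq_mat2 mat2_eq_iff)
  then show "\<beta> = 0" using h(3,4) by (auto simp: \<tau>_def)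
qed

lemma stabilizer_fixes_partner:
  assumes h: "h \<in> \<Gamma>" "h z0 = z0" "h z1 = z1" "h \<noteq> id" and g: "g \<in> \<Gamma>" "g z1 = z1"
  shows "g z0 = z0"
proof -
  obtain a where a: "a \<noteq> 0" "pair_conj z0 z1 h = affm a 0"
    using pair_conj_fix_both[OF z01 in_PGL2] h by blast
  have "norm a \<noteq> 1" using unimodular_multiplier_trivial h(1,4) a(2) by blast
  then obtain h' a' where h': "h' \<in> \<Gamma>" "pair_conj z0 z1 h' = affm a' 0" "norm a' < 1" "a' \<noteq> 0"
  proof (cases "norm a < 1")
    case False
    then have "norm (1/a) < 1" using \<open>norm a \<noteq> 1\<close> by (simp add: norm_divide divide_less_eq)
    moreover have "pair_conj z0 z1 (inv h) = affm (1/a) 0"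
      using a by (simp add: pair_conj_inv[OF z01 PGL2_bij[OF in_PGL2[OF h(1)]]] inv_affm)
    ultimately show ?thesis using that[of "inv h" "1/a"] h(1) a(1) by auto
  qed (use that h(1) a in auto)
  obtain \<alpha> \<beta> where "\<alpha> \<noteq> 0" "pair_conj z0 z1 g = affm \<alpha> \<beta>"
    using pair_conj_fix_z1[OF z01 in_PGL2] g by blast
  with translation_part_vanishes[OF h' g(1)] show "g z0 = z0" by (simp add: fix_z0_iff[OF z01])
qed

lemma fixed_points_inequivalent:
  assumes u: "u \<in> \<Gamma>" "u z0 = z0" "u z1 = z1" "u \<noteq> id" and \<gamma>: "\<gamma> \<in> \<Gamma>"
  shows "\<gamma> z1 \<noteq> z0"
proof
  assume \<gamma>1: "\<gamma> z1 = z0"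
  define w where "w = inv \<gamma> \<circ> u \<circ> \<gamma>"
  have w: "w \<in> \<Gamma>" unfolding w_def by (intro comp_in inv_in u(1) \<gamma>)
  have "w z1 = z1" unfolding w_def using \<gamma> \<gamma>1 u(2) by (simp add: inv_apply_eq_iff)
  then have "w z0 = z0" by (rule stabilizer_fixes_partner[OF u w])
  then have "u (\<gamma> z0) = \<gamma> z0" unfolding w_def using \<gamma> by (simp add: inv_apply_eq_iff)
  moreover have "\<gamma> z0 \<noteq> z0" using \<gamma>1 z01 apply_eq_iff[OF \<gamma>, of z0 z1] by auto
  moreover have "\<gamma> z0 \<noteq> z1" using no_swap[OF \<gamma>] \<gamma>1 by blast
  ultimately have "u = id" by (intro PGL2_fix_three_points[OF z01 in_PGL2[OF u(1)] u(2,3)])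
  then show False using u(4) by simp
qed

lemma stabilized_pairs_aligned:
  assumes u: "u \<in> \<Gamma>" "u z0 = z0" "u z1 = z1" "u \<noteq> id"
    and v: "v \<in> \<Gamma>" "v y0 = y0" "v y1 = y1" "v \<noteq> id" "y0 \<noteq> y1"
    and \<gamma>: "\<gamma> \<in> \<Gamma>" "\<gamma> y1 = z1"
  shows "\<gamma> y0 = z0"
proof (rule ccontr)
  assume ne: "\<gamma> y0 \<noteq> z0"
  define w where "w = \<gamma> \<circ> v \<circ> inv \<gamma>"
  have w: "w \<in> \<Gamma>" unfolding w_def by (intro comp_in inv_in v(1) \<gamma>(1))
  have "inv \<gamma> z1 = y1" using \<gamma> by (simp add: inv_apply_eq_iff)
  then have "w z1 = z1" "w (\<gamma> y0) = \<gamma> y0" unfolding w_def using \<gamma> v(2,3) by simp_all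
  moreover have "w z0 = z0" using stabilizer_fixes_partner[OF u w] \<open>w z1 = z1\<close> .
  moreover have "\<gamma> y0 \<noteq> z1" using \<gamma> v(5) apply_eq_iff[of \<gamma> y0 y1] by auto
  ultimately have "w = id" using PGL2_fix_three_points[OF z01 in_PGL2[OF w]] ne by blast
  then have "v = inv \<gamma> \<circ> w \<circ> \<gamma>" unfolding w_def using \<gamma>(1) by (simp add: fun_eq_iff)
  then show False using \<open>w = id\<close> \<gamma>(1) v(4) by simp
qed

end

end

section \<open>The bar complex in degrees at most 2\<close>

lemma tuples_1_iff: "zs \<in> tuples 1 \<longleftrightarrow> (\<exists>a b. zs = [a, b] \<and> a \<noteq> b)"
  by (auto simp: tuples_def length_Suc_conv)

lemma tuples_0_iff: "zs \<in> tuples 0 \<longleftrightarrow> (\<exists>a. zs = [a])"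
  by (auto simp: tuples_def length_Suc_conv)

lemma permute_tuple_id [simp]: "permute_tuple id zs = zs"
  by (simp add: permute_tuple_def map_nth)

lemma permute_tuple_pair: "permute_tuple \<tau> [a, b] = [[a, b] ! \<tau> 0, [a, b] ! \<tau> 1]"
  by (simp add: permute_tuple_def upt_conv_Cons)

lemma alternating_on_pairs:
  assumes "\<And>a b. a \<noteq> b \<Longrightarrow> W (gs, [b, a]) = - W (gs, [a, b])" "zs \<in> tuples 1" "\<tau> permutes {..1}"
  shows "W (gs, permute_tuple \<tau> zs) = of_int (sign \<tau>) * W (gs, zs)"
proof -
  obtain a b where zs: "zs = [a, b]" "a \<noteq> b" using assms(2) tuples_1_iff by blast
  have "{..1::nat} = {0, 1}" by auto
  then have "\<tau> = id \<or> \<tau> = Transposition.transpose 0 1"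
    using assms(3) permutes_doubleton_iff by metis
  then show ?thesis
    unfolding zs(1) using assms(1)[OF zs(2)] by (elim disjE) (simp_all add: permute_tuple_pair sign_swap_id)
qed

lemma bar_d_1: "bar_d ([g], m) = (\<lambda>y. delta ([], map (inv g) m) y - delta ([], m) y)"
  by (simp add: bar_d_def fun_eq_iff)

lemma bar_d_2:
  "bar_d ([g, h], m) = (\<lambda>y. delta ([h], map (inv g) m) y - delta ([g \<circ> h], m) y + delta ([g], m) y)"
  by (simp add: bar_d_def fun_eq_iff merge_at_def)

lemma coeff_bd_pair: "coeff_bd (gs, [a, b]) = (\<lambda>y. delta (gs, [b]) y - delta (gs, [a]) y)"
  by (simp add: coeff_bd_def fun_eq_iff omit_def numeral_2_eq_2 lessThan_Suc)

lemma finite_supp_bar_d [simp]: "finite (supp (bar_d x))"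
proof -
  have "finite (supp (\<lambda>y. (-1) ^ Suc i * delta (merge_at i (fst x), snd x) y))" for i
    by (rule finite_supp_scale) simp
  then show ?thesis unfolding bar_d_def Let_def by (simp del: power_Suc)
qed

lemma finite_supp_coeff_bd [simp]: "finite (supp (coeff_bd x))"
  unfolding coeff_bd_def by simp

lemma finite_supp_chains: "c \<in> chains \<Gamma> k n \<Longrightarrow> finite (supp c)"
  unfolding chains_def by (erule finite_supp_zspan) auto

lemma finite_supp_rel_chains: "c \<in> rel_chains \<Gamma> k n \<Longrightarrow> finite (supp c)"
  unfolding rel_chains_def by (erule finite_supp_zspan) auto

lemma supp_chains:
  assumes "c \<in> chains \<Gamma> k n" "x \<in> supp c"
  obtains gs zs where "x = (gs, zs)" "length gs = k" "set gs \<subseteq> \<Gamma>" "zs \<in> tuples n"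
  using supp_zspan[OF assms(1)[unfolded chains_def]] assms(2) that by auto

lemma pairing_rel_chains_eq_0:
  assumes "r \<in> rel_chains \<Gamma> k n"
    and "\<And>gs zs \<tau>. length gs = k \<Longrightarrow> set gs \<subseteq> \<Gamma> \<Longrightarrow> zs \<in> tuples n \<Longrightarrow> \<tau> permutes {..n} \<Longrightarrow>
      W (gs, permute_tuple \<tau> zs) = of_int (sign \<tau>) * W (gs, zs)"
  shows "pairing r W = 0"
proof (rule pairing_zspan_eq_0[OF assms(1)[unfolded rel_chains_def]])
  fix b assume "b \<in> {\<lambda>x. delta (gs, zs) x - sign \<tau> * delta (gs, permute_tuple \<tau> zs) x | gs zs \<tau>.
    length gs = k \<and> set gs \<subseteq> \<Gamma> \<and> zs \<in> tuples n \<and> \<tau> permutes {..n}}"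
  then obtain gs zs \<tau> where b: "b = (\<lambda>x. delta (gs, zs) x - sign \<tau> * delta (gs, permute_tuple \<tau> zs) x)"
    and W: "W (gs, permute_tuple \<tau> zs) = of_int (sign \<tau>) * W (gs, zs)"
    using assms(2) by blast
  have "of_int (sign \<tau>) * (of_int (sign \<tau>) * w) = w" for w :: 'a
    by (simp add: mult.assoc[symmetric] flip: of_int_mult)
  then show "pairing b W = 0" unfolding b by (simp add: W)
  show "finite (supp b)" unfolding b by simp
qed

lemma boundaries1_subgroup: "int_subgroup (boundaries1 \<Gamma> n)"
proof
  show "(\<lambda>_. 0) \<in> boundaries1 \<Gamma> n"
    unfolding boundaries1_def chains_def rel_chains_def
    by (force intro: zspan.zspan_zero)
next
  fix x y assume "x \<in> boundaries1 \<Gamma> n" "y \<in> boundaries1 \<Gamma> n"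
  then obtain b1 r1 b2 r2 where
    x: "x = (\<lambda>y. lin bar_d b1 y + r1 y)" "b1 \<in> chains \<Gamma> 2 n" "r1 \<in> rel_chains \<Gamma> 1 n" and
    y: "y = (\<lambda>y. lin bar_d b2 y + r2 y)" "b2 \<in> chains \<Gamma> 2 n" "r2 \<in> rel_chains \<Gamma> 1 n"
    unfolding boundaries1_def by blast
  have "(\<lambda>k. x k - y k) = (\<lambda>z. lin bar_d (\<lambda>k. b1 k - b2 k) z + (\<lambda>k. r1 k - r2 k) z)"
    using x y finite_supp_chains[OF x(2)] finite_supp_chains[OF y(2)] by (simp add: lin_diff fun_eq_iff)
  moreover have "(\<lambda>k. b1 k - b2 k) \<in> chains \<Gamma> 2 n" "(\<lambda>k. r1 k - r2 k) \<in> rel_chains \<Gamma> 1 n"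
    using x y unfolding chains_def rel_chains_def by (simp_all add: zspan.zspan_diff)
  ultimately show "(\<lambda>k. x k - y k) \<in> boundaries1 \<Gamma> n"
    unfolding boundaries1_def by (intro CollectI exI[of _ "\<lambda>k. b1 k - b2 k"] exI[of _ "\<lambda>k. r1 k - r2 k"]) simp
qed

interpretation boundaries1: int_subgroup "boundaries1 \<Gamma> n" for \<Gamma> n
  by (fact boundaries1_subgroup)

lemma bar_d_in_boundaries1:
  assumes "g \<in> \<Gamma>" "h \<in> \<Gamma>" "zs \<in> tuples n"
  shows "bar_d ([g, h], zs) \<in> boundaries1 \<Gamma> n"
proof -
  have "delta ([g, h], zs) \<in> chains \<Gamma> 2 n"
    unfolding chains_def using assms
    by (intro zspan.zspan_base CollectI exI[of _ "[g, h]"] exI[of _ zs]) (simp add: numeral_2_eq_2)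
  moreover have "(\<lambda>_. 0) \<in> rel_chains \<Gamma> 1 n" unfolding rel_chains_def by (rule zspan.zspan_zero)
  ultimately show ?thesis unfolding boundaries1_def
    by (intro CollectI exI[of _ "delta ([g, h], zs)"] exI[of _ "\<lambda>_. 0"]) simp
qed

lemma rel_chains_in_boundaries1: "r \<in> rel_chains \<Gamma> 1 n \<Longrightarrow> r \<in> boundaries1 \<Gamma> n"
  unfolding boundaries1_def chains_def by (force intro: zspan.zspan_zero)

lemma pairing_boundaries1_eq_0:
  assumes "x \<in> boundaries1 \<Gamma> n"
    and cocycle: "\<And>g h zs. g \<in> \<Gamma> \<Longrightarrow> h \<in> \<Gamma> \<Longrightarrow> zs \<in> tuples n \<Longrightarrow>
      W ([h], map (inv g) zs) - W ([g \<circ> h], zs) + W ([g], zs) = 0"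
    and alternating: "\<And>gs zs \<tau>. length gs = 1 \<Longrightarrow> set gs \<subseteq> \<Gamma> \<Longrightarrow> zs \<in> tuples n \<Longrightarrow>
      \<tau> permutes {..n} \<Longrightarrow> W (gs, permute_tuple \<tau> zs) = of_int (sign \<tau>) * W (gs, zs)"
  shows "pairing x W = 0"
proof -
  obtain b r where x: "x = (\<lambda>y. lin bar_d b y + r y)" "b \<in> chains \<Gamma> 2 n" "r \<in> rel_chains \<Gamma> 1 n"
    using assms(1) unfolding boundaries1_def by blast
  have fb: "finite (supp b)" using finite_supp_chains[OF x(2)] .
  have "pairing (bar_d k) W = 0" if k: "k \<in> supp b" for k
  proof -
    obtain gs zs where "k = (gs, zs)" "length gs = 2" "set gs \<subseteq> \<Gamma>" "zs \<in> tuples n"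
      using supp_chains[OF x(2) k] .
    then show ?thesis using cocycle
      by (auto simp: numeral_2_eq_2 length_Suc_conv bar_d_2)
  qed
  then have "pairing (lin bar_d b) W = 0" by (simp add: pairing_lin[OF fb] pairing_eq_0)
  moreover have "pairing r W = 0" using pairing_rel_chains_eq_0[OF x(3) alternating] .
  ultimately show ?thesis
    using fb finite_supp_rel_chains[OF x(3)] by (simp add: x(1) finite_supp_lin)
qed

context torsion_free_kleinian
begin

lemma cocycle_in_boundaries1:
  assumes "g \<in> \<Gamma>" "h \<in> \<Gamma>" "zs \<in> tuples n"
  shows "(\<lambda>y. delta ([h], map (inv g) zs) y - delta ([g \<circ> h], zs) y + delta ([g], zs) y) \<in> boundaries1 \<Gamma> n"
  using bar_d_in_boundaries1[OF assms] by (simp add: bar_d_2)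

lemma delta_id_in_boundaries1: "zs \<in> tuples n \<Longrightarrow> delta ([id], zs) \<in> boundaries1 \<Gamma> n"
  using cocycle_in_boundaries1[OF id_in id_in] by simp

lemma reverse_in_boundaries1:
  assumes "g \<in> \<Gamma>" "[p, q] \<in> tuples 1"
  shows "(\<lambda>y. delta ([g], [p, q]) y + delta ([g], [q, p]) y) \<in> boundaries1 \<Gamma> 1"
proof -
  let ?t = "Transposition.transpose (0::nat) 1"
  have "?t permutes {..1}" by (rule permutes_swap_id) auto
  then have "(\<lambda>y. delta ([g], [p, q]) y - sign ?t * delta ([g], permute_tuple ?t [p, q]) y) \<in> rel_chains \<Gamma> 1 1"
    unfolding rel_chains_def using assms
    by (intro zspan.zspan_base CollectI exI[of _ "[g]"] exI[of _ "[p, q]"] exI[of _ ?t]) simp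
  then show ?thesis
    by (auto simp: permute_tuple_pair sign_swap_id intro: rel_chains_in_boundaries1)
qed

section \<open>Orbits of pairs and a normal form for 1-cycles\<close>

definition pair_orbit :: "pt list \<Rightarrow> pt list set" where
  "pair_orbit m = {map g m | g. g \<in> \<Gamma>} \<union> {map g (rev m) | g. g \<in> \<Gamma>}"

definition orbit_rep :: "pt list \<Rightarrow> pt list" where
  "orbit_rep m = (SOME r. r \<in> pair_orbit m)"

definition positively_oriented :: "pt list \<Rightarrow> bool" where
  "positively_oriented m \<longleftrightarrow> (\<exists>\<gamma>\<in>\<Gamma>. map \<gamma> (orbit_rep m) = m)"

definition oriented :: "pt list \<Rightarrow> pt list" where
  "oriented m = (if positively_oriented m then m else rev m)"

definition orientation :: "pt list \<Rightarrow> int" where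
  "orientation m = (if positively_oriented m then 1 else -1)"

definition transporter :: "pt list \<Rightarrow> (pt \<Rightarrow> pt)" where
  "transporter m = (SOME \<gamma>. \<gamma> \<in> \<Gamma> \<and> map \<gamma> (orbit_rep m) = oriented m)"

lemma map_in_pair_orbit: "g \<in> \<Gamma> \<Longrightarrow> map g m \<in> pair_orbit m"
  and map_rev_in_pair_orbit: "g \<in> \<Gamma> \<Longrightarrow> map g (rev m) \<in> pair_orbit m"
  unfolding pair_orbit_def by blast+

lemma pair_orbit_self: "m \<in> pair_orbit m"
  and rev_in_pair_orbit: "rev m \<in> pair_orbit m"
  using map_in_pair_orbit[OF id_in] map_rev_in_pair_orbit[OF id_in] by simp_all

lemma pair_orbit_cases:
  assumes "r \<in> pair_orbit m"
  obtains g where "g \<in> \<Gamma>" "r = map g m" | g where "g \<in> \<Gamma>" "r = map g (rev m)"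
  using assms unfolding pair_orbit_def by blast

lemma pair_orbit_trans: "x \<in> pair_orbit r \<Longrightarrow> r \<in> pair_orbit m \<Longrightarrow> x \<in> pair_orbit m"
  by (elim pair_orbit_cases) (auto simp: rev_map intro: map_in_pair_orbit map_rev_in_pair_orbit)

lemma pair_orbit_sym: "r \<in> pair_orbit m \<Longrightarrow> m \<in> pair_orbit r"
proof (elim pair_orbit_cases)
  fix g assume "g \<in> \<Gamma>" "r = map g m"
  then show "m \<in> pair_orbit r" using map_in_pair_orbit[of "inv g" r] by auto
next
  fix g assume "g \<in> \<Gamma>" "r = map g (rev m)"
  then show "m \<in> pair_orbit r" using map_rev_in_pair_orbit[of "inv g" r] by (auto simp: rev_map)
qed

lemma orbit_rep_in: "orbit_rep m \<in> pair_orbit m"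
  unfolding orbit_rep_def using pair_orbit_self by (rule someI)

lemma orbit_rep_eq: "r \<in> pair_orbit m \<Longrightarrow> orbit_rep r = orbit_rep m"
proof -
  assume "r \<in> pair_orbit m"
  then have "pair_orbit r = pair_orbit m" using pair_orbit_trans pair_orbit_sym by blast
  then show ?thesis by (simp add: orbit_rep_def)
qed

lemma orbit_rep_map: "g \<in> \<Gamma> \<Longrightarrow> orbit_rep (map g m) = orbit_rep m"
  and orbit_rep_rev: "orbit_rep (rev m) = orbit_rep m"
  and orbit_rep_idem: "orbit_rep (orbit_rep m) = orbit_rep m"
  using orbit_rep_eq map_in_pair_orbit rev_in_pair_orbit orbit_rep_in by blast+

lemma tuples_1_map: "g \<in> \<Gamma> \<Longrightarrow> m \<in> tuples 1 \<Longrightarrow> map g m \<in> tuples 1"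
  and tuples_1_rev: "m \<in> tuples 1 \<Longrightarrow> rev m \<in> tuples 1"
  by (auto simp: tuples_def distinct_map inj_on_def apply_eq_iff)

lemma pair_orbit_tuples: "m \<in> tuples 1 \<Longrightarrow> r \<in> pair_orbit m \<Longrightarrow> r \<in> tuples 1"
  by (elim pair_orbit_cases) (use tuples_1_map tuples_1_rev in blast)+

lemma orbit_rep_tuples: "m \<in> tuples 1 \<Longrightarrow> orbit_rep m \<in> tuples 1"
  using pair_orbit_tuples orbit_rep_in by blast

lemma positively_oriented_map:
  assumes g: "g \<in> \<Gamma>"
  shows "positively_oriented (map g m) = positively_oriented m"
proof
  assume "positively_oriented (map g m)"
  then obtain \<gamma> where "\<gamma> \<in> \<Gamma>" "map \<gamma> (orbit_rep m) = map g m"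
    unfolding positively_oriented_def orbit_rep_map[OF g] by blast
  then have "inv g \<circ> \<gamma> \<in> \<Gamma>" "map (inv g \<circ> \<gamma>) (orbit_rep m) = m"
    using g by (auto simp flip: map_map)
  then show "positively_oriented m" unfolding positively_oriented_def by blast
next
  assume "positively_oriented m"
  then obtain \<gamma> where "\<gamma> \<in> \<Gamma>" "map \<gamma> (orbit_rep m) = m" unfolding positively_oriented_def by blast
  then have "g \<circ> \<gamma> \<in> \<Gamma>" "map (g \<circ> \<gamma>) (orbit_rep (map g m)) = map g m"
    using g by (auto simp: orbit_rep_map simp flip: map_map)
  then show "positively_oriented (map g m)" unfolding positively_oriented_def by blast
qed

lemma positively_oriented_or_rev: "positively_oriented m \<or> positively_oriented (rev m)"
proof -
  obtain g where g: "g \<in> \<Gamma>" "orbit_rep m = map g m \<or> orbit_rep m = map g (rev m)"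
    using orbit_rep_in[of m] by (elim pair_orbit_cases) auto
  then have "map (inv g) (orbit_rep m) = m \<or> map (inv g) (orbit_rep m) = rev m" by auto
  then show ?thesis unfolding positively_oriented_def orbit_rep_rev using inv_in[OF g(1)] by blast
qed

text \<open>Torsion-freeness enters here: no element of \<Gamma> reverses a pair, so every pair
  has a well-defined orientation relative to the representative of its orbit.\<close>

lemma positively_oriented_rev: "m \<in> tuples 1 \<Longrightarrow> positively_oriented (rev m) \<longleftrightarrow> \<not> positively_oriented m"
proof -
  assume m: "m \<in> tuples 1"
  have False if "\<gamma>1 \<in> \<Gamma>" "map \<gamma>1 (orbit_rep m) = m" "\<gamma>2 \<in> \<Gamma>" "map \<gamma>2 (orbit_rep m) = rev m"
    for \<gamma>1 \<gamma>2
  proof -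
    obtain a b where ab: "m = [a, b]" "a \<noteq> b" using m tuples_1_iff by blast
    have "orbit_rep m = map (inv \<gamma>1) m" using that(1,2) by (metis map_inv_map)
    then have "map (\<gamma>2 \<circ> inv \<gamma>1) m = rev m" using that(4) by simp
    then show False using no_swap[OF ab(2), of "\<gamma>2 \<circ> inv \<gamma>1"] that(1,3) ab(1) by auto
  qed
  then show ?thesis using positively_oriented_or_rev[of m] unfolding positively_oriented_def orbit_rep_rev by blast
qed

lemma transporter: "transporter m \<in> \<Gamma>" "map (transporter m) (orbit_rep m) = oriented m"
proof -
  have "\<exists>\<gamma>. \<gamma> \<in> \<Gamma> \<and> map \<gamma> (orbit_rep m) = oriented m"
    using positively_oriented_or_rev[of m] unfolding oriented_def positively_oriented_def orbit_rep_rev by auto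
  then show "transporter m \<in> \<Gamma>" "map (transporter m) (orbit_rep m) = oriented m"
    unfolding transporter_def by (metis (mono_tags, lifting) someI_ex)+
qed

lemma oriented_map: "g \<in> \<Gamma> \<Longrightarrow> oriented (map g m) = map g (oriented m)"
  and orientation_map: "g \<in> \<Gamma> \<Longrightarrow> orientation (map g m) = orientation m"
  unfolding oriented_def orientation_def by (simp_all add: positively_oriented_map rev_map)

lemma oriented_rev: "m \<in> tuples 1 \<Longrightarrow> oriented (rev m) = oriented m"
  and orientation_rev: "m \<in> tuples 1 \<Longrightarrow> orientation (rev m) = - orientation m"
  and transporter_rev: "m \<in> tuples 1 \<Longrightarrow> transporter (rev m) = transporter m"
  unfolding oriented_def orientation_def transporter_def by (simp_all add: positively_oriented_rev orbit_rep_rev)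

lemma oriented_tuples: "m \<in> tuples 1 \<Longrightarrow> oriented m \<in> tuples 1"
  using tuples_1_rev[of m] by (simp add: oriented_def)

definition transport_chain :: "pt list \<Rightarrow> ((pt \<Rightarrow> pt) list \<times> pt list) \<Rightarrow> int" where
  "transport_chain m = (\<lambda>z. orientation m * delta ([transporter m], oriented m) z)"

definition stab_part :: "(pt \<Rightarrow> pt) \<Rightarrow> pt list \<Rightarrow> (pt \<Rightarrow> pt)" where
  "stab_part g m = inv (transporter m) \<circ> g \<circ> transporter (map (inv g) m)"

definition retraction :: "(pt \<Rightarrow> pt) list \<times> pt list \<Rightarrow> ((pt \<Rightarrow> pt) list \<times> pt list) \<Rightarrow> int" where
  "retraction x = (\<lambda>z. orientation (snd x) *
     delta ([stab_part (hd (fst x)) (snd x)], orbit_rep (snd x)) z)"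

definition stabilizer_chains :: "pt list \<Rightarrow> (((pt \<Rightarrow> pt) list \<times> pt list) \<Rightarrow> int) set" where
  "stabilizer_chains r = {delta ([u], r) | u. u \<in> \<Gamma> \<and> map u r = r}"

lemma stab_part:
  assumes "g \<in> \<Gamma>"
  shows "stab_part g m \<in> \<Gamma>" "map (stab_part g m) (orbit_rep m) = orbit_rep m"
proof -
  let ?q = "map (inv g) m"
  have "map (transporter ?q) (orbit_rep m) = map (inv g) (oriented m)"
    using transporter(2)[of ?q] oriented_map[of "inv g" m] orbit_rep_map[of "inv g" m] inv_in[OF assms] by auto
  moreover have "map (inv (transporter m)) (oriented m) = orbit_rep m"
    using map_inv_map[OF transporter(1)[of m], of "orbit_rep m"] unfolding transporter(2) .
  ultimately show "map (stab_part g m) (orbit_rep m) = orbit_rep m"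
    using assms unfolding stab_part_def by (simp flip: map_map)
  show "stab_part g m \<in> \<Gamma>" unfolding stab_part_def using assms transporter(1) by blast
qed

text \<open>Writing g = t \<circ> s \<circ> inv t', where t and t' carry the orbit representative to the
  oriented forms of m and of inv g m, three bar relations express [g] through [t], [s] and [t'].\<close>

lemma transporter_relation_homologous:
  assumes g: "g \<in> \<Gamma>" and m: "m \<in> tuples 1"
  shows "(\<lambda>z. delta ([g], oriented m) z - delta ([transporter m], oriented m) z
      - delta ([stab_part g m], orbit_rep m) z
      + delta ([transporter (map (inv g) m)], oriented (map (inv g) m)) z) \<in> boundaries1 \<Gamma> 1"
proof -
  define r t q t' s n n' where defs: "r = orbit_rep m" "t = transporter m" "q = map (inv g) m"
    "t' = transporter q" "s = stab_part g m" "n = oriented m" "n' = oriented q"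
  have ig: "inv g \<in> \<Gamma>" using g by blast
  have t: "t \<in> \<Gamma>" "map (inv t) n = r" and t': "t' \<in> \<Gamma>" "map (inv t') n' = r"
    using transporter[of m] transporter[of q] orbit_rep_map[OF ig] map_inv_map
    unfolding defs by metis+
  have s: "s \<in> \<Gamma>" "map (inv s) r = r"
    using stab_part[OF g] map_inv_map unfolding defs by metis+
  have r1: "r \<in> tuples 1" and n1: "n \<in> tuples 1" and n'1: "n' \<in> tuples 1"
    unfolding defs using orbit_rep_tuples oriented_tuples tuples_1_map[OF ig] m by auto
  have "t \<circ> (s \<circ> inv t') = g" using t t' unfolding defs stab_part_def by (simp add: fun_eq_iff)
  then have A: "(\<lambda>z. delta ([s \<circ> inv t'], r) z - delta ([g], n) z + delta ([t], n) z) \<in> boundaries1 \<Gamma> 1"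
    using cocycle_in_boundaries1[OF t(1) comp_in[OF s(1) inv_in[OF t'(1)]] n1] t(2) by simp
  have B: "(\<lambda>z. delta ([inv t'], r) z - delta ([s \<circ> inv t'], r) z + delta ([s], r) z) \<in> boundaries1 \<Gamma> 1"
    using cocycle_in_boundaries1[OF s(1) inv_in[OF t'(1)] r1] s(2) by simp
  have C: "(\<lambda>z. delta ([inv t'], r) z - delta ([id], n') z + delta ([t'], n') z) \<in> boundaries1 \<Gamma> 1"
    using cocycle_in_boundaries1[OF t'(1) inv_in[OF t'(1)] n'1] t' by simp
  from boundaries1.neg_mem[OF boundaries1.diff_mem[OF boundaries1.diff_mem[OF
      boundaries1.add_mem[OF A B] C] delta_id_in_boundaries1[OF n'1]]]
  show ?thesis unfolding defs[symmetric] by (simp add: algebra_simps)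
qed

text \<open>transport_chain is a chain homotopy between the identity and retraction.\<close>

lemma generator_homologous_retraction:
  assumes g: "g \<in> \<Gamma>" and m: "m \<in> tuples 1"
  shows "(\<lambda>z. delta ([g], m) z - retraction ([g], m) z
            - transport_chain m z + transport_chain (map (inv g) m) z) \<in> boundaries1 \<Gamma> 1"
proof -
  define r t q t' s n n' where defs: "r = orbit_rep m" "t = transporter m" "q = map (inv g) m"
    "t' = transporter q" "s = stab_part g m" "n = oriented m" "n' = oriented q"
  have key: "(\<lambda>z. delta ([g], n) z - delta ([t], n) z - delta ([s], r) z + delta ([t'], n') z)
      \<in> boundaries1 \<Gamma> 1"
    using transporter_relation_homologous[OF g m] unfolding defs .
  have ig: "inv g \<in> \<Gamma>" using g by blast
  have transport: "transport_chain m = (\<lambda>z. orientation m * delta ([t], n) z)"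
    "transport_chain q = (\<lambda>z. orientation m * delta ([t'], n') z)"
    unfolding transport_chain_def defs using orientation_map[OF ig] by simp_all
  have retr: "retraction ([g], m) = (\<lambda>z. orientation m * delta ([s], r) z)"
    unfolding retraction_def defs by simp
  show ?thesis
  proof (cases "positively_oriented m")
    case True
    then have "n = m" "orientation m = 1" unfolding defs oriented_def orientation_def by simp_all
    then show ?thesis using key unfolding transport retr defs(3)[symmetric] by (simp add: algebra_simps)
  next
    case False
    then have nr: "n = rev m" "orientation m = -1" unfolding defs oriented_def orientation_def by simp_all
    obtain a b where ab: "m = [a, b]" using m tuples_1_iff by blast
    have "(\<lambda>z. delta ([g], m) z + delta ([g], n) z) \<in> boundaries1 \<Gamma> 1"
      using reverse_in_boundaries1[OF g, of a b] m ab nr by simp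
    from boundaries1.diff_mem[OF this key] show ?thesis
      unfolding transport retr defs(3)[symmetric] nr(2) by (simp add: algebra_simps)
  qed
qed

lemma transport_chain_rev:
  assumes "m \<in> tuples 1"
  shows "transport_chain (rev m) = (\<lambda>z. - transport_chain m z)"
  unfolding transport_chain_def orientation_rev[OF assms] oriented_rev[OF assms] transporter_rev[OF assms]
  by simp

lemma pairing_transport_rel_chains:
  assumes "r \<in> rel_chains \<Gamma> 0 1"
  shows "pairing r (\<lambda>k. transport_chain (snd k) l) = 0"
proof (rule pairing_rel_chains_eq_0[OF assms])
  fix gs zs and \<tau> :: "nat \<Rightarrow> nat"
  assume zs: "zs \<in> tuples 1" and \<tau>: "\<tau> permutes {..1}"
  have "transport_chain (snd (gs, [b, a])) l = - transport_chain (snd (gs, [a, b])) l" if "a \<noteq> b" for a b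
    using transport_chain_rev[of "[a, b]"] that by (simp add: tuples_def)
  from alternating_on_pairs[of "\<lambda>k. transport_chain (snd k) l", OF this zs \<tau>]
  show "transport_chain (snd (gs, permute_tuple \<tau> zs)) l =
      of_int (sign \<tau>) * transport_chain (snd (gs, zs)) l" .
qed

text \<open>Summed over the generators of a cycle, the transport terms add up to the image under
  transport_chain of its bar boundary, which vanishes because that boundary is a sign relation.\<close>

lemma cycle_homologous_to_retraction:
  assumes "c \<in> cycles1 \<Gamma> 1"
  shows "(\<lambda>z. c z - lin retraction c z) \<in> boundaries1 \<Gamma> 1"
proof -
  have c: "c \<in> chains \<Gamma> 1 1" and dc: "lin bar_d c \<in> rel_chains \<Gamma> 0 1"
    using assms unfolding cycles1_def by auto
  have fc: "finite (supp c)" using finite_supp_chains[OF c] .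
  define T where "T k = transport_chain (snd k)" for k :: "(pt \<Rightarrow> pt) list \<times> pt list"
  have "(\<lambda>z. delta x z - retraction x z + lin T (bar_d x) z) \<in> boundaries1 \<Gamma> 1" if x: "x \<in> supp c" for x
  proof -
    obtain gs m where x: "x = (gs, m)" "length gs = 1" "set gs \<subseteq> \<Gamma>" "m \<in> tuples 1"
      using supp_chains[OF c x] .
    then obtain g where "gs = [g]" "g \<in> \<Gamma>" by (auto simp: length_Suc_conv)
    with x show ?thesis
      using generator_homologous_retraction[of g m]
      by (simp add: bar_d_1 lin_diff T_def algebra_simps)
  qed
  then have sum_in: "(\<lambda>z. \<Sum>x\<in>supp c. c x * (delta x z - retraction x z + lin T (bar_d x) z))
      \<in> boundaries1 \<Gamma> 1"
    using fc by (intro boundaries1.sum_mem boundaries1.scale_mem)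
  have "lin (\<lambda>x. lin T (bar_d x)) c = lin T (lin bar_d c)"
    using fc by (simp add: lin_lin)
  also have "\<dots> = (\<lambda>_. 0)"
    unfolding lin_eq_pairing[of T] T_def using pairing_transport_rel_chains[OF dc] by simp
  finally have zero: "lin (\<lambda>x. lin T (bar_d x)) c = (\<lambda>_. 0)" .
  have "(\<Sum>x\<in>supp c. c x * (delta x z - retraction x z + lin T (bar_d x) z)) =
      c z - lin retraction c z + lin (\<lambda>x. lin T (bar_d x)) c z" for z
    using fun_cong[OF chain_expansion[OF fc], of z]
    by (simp add: lin_as_sum sum.distrib sum_subtractf algebra_simps)
  then show ?thesis using sum_in by (simp add: zero)
qed

lemma retraction_in_stabilizer_span:
  assumes "c \<in> chains \<Gamma> 1 1"
  shows "lin retraction c \<in> zspan (\<Union>r\<in>{r \<in> tuples 1. orbit_rep r = r}. stabilizer_chains r)"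
proof -
  have "retraction x \<in> zspan (\<Union>r\<in>{r \<in> tuples 1. orbit_rep r = r}. stabilizer_chains r)"
    if x: "x \<in> supp c" for x
  proof -
    obtain gs m where "x = (gs, m)" "length gs = 1" "set gs \<subseteq> \<Gamma>" "m \<in> tuples 1"
      using supp_chains[OF assms x] .
    then obtain g where "x = ([g], m)" "g \<in> \<Gamma>" "m \<in> tuples 1" by (auto simp: length_Suc_conv)
    then have "delta ([stab_part g m], orbit_rep m) \<in> stabilizer_chains (orbit_rep m)"
      and "orbit_rep m \<in> {r \<in> tuples 1. orbit_rep r = r}"
      using stab_part orbit_rep_tuples orbit_rep_idem unfolding stabilizer_chains_def by auto
    then show ?thesis
      unfolding retraction_def \<open>x = ([g], m)\<close> by (intro zspan.scale_mem zspan.zspan_base) auto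
  qed
  then show ?thesis
    unfolding lin_as_sum by (intro zspan.sum_mem zspan.scale_mem) (auto simp: finite_supp_chains[OF assms])
qed

text \<open>Inside one stabilizer the bar relation [u] - [u v] + [v] = 0 collapses any
  combination of generators to a single one.\<close>

lemma stabilizer_span_homologous:
  assumes "v \<in> zspan (stabilizer_chains r)" "r \<in> tuples 1"
  shows "\<exists>u. u \<in> \<Gamma> \<and> map u r = r \<and> (\<lambda>z. v z - delta ([u], r) z) \<in> boundaries1 \<Gamma> 1"
  using assms(1)
proof induction
  case zspan_zero
  have "(\<lambda>z. (\<lambda>_. 0) z - delta ([id], r) z) \<in> boundaries1 \<Gamma> 1"
    using boundaries1.diff_mem[OF boundaries1.zero_mem delta_id_in_boundaries1[OF assms(2)]] .
  moreover have "map id r = r" by simp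
  ultimately show ?case using id_in by blast
next
  case (zspan_base b)
  then obtain u where "b = delta ([u], r)" "u \<in> \<Gamma>" "map u r = r"
    unfolding stabilizer_chains_def by blast
  then show ?case using boundaries1.zero_mem by (intro exI[of _ u]) simp
next
  case (zspan_diff x y)
  obtain u1 where u1: "u1 \<in> \<Gamma>" "map u1 r = r" "(\<lambda>z. x z - delta ([u1], r) z) \<in> boundaries1 \<Gamma> 1"
    using zspan_diff.IH(1) by blast
  obtain u2 where u2: "u2 \<in> \<Gamma>" "map u2 r = r" "(\<lambda>z. y z - delta ([u2], r) z) \<in> boundaries1 \<Gamma> 1"
    using zspan_diff.IH(2) by blast
  define w where "w = u1 \<circ> inv u2"
  have w: "w \<in> \<Gamma>" "w \<circ> u2 = u1" unfolding w_def using u1 u2 by (auto simp: fun_eq_iff)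
  have "map (inv u2) r = r" using u2 map_inv_map by metis
  then have "map w r = r" unfolding w_def using u1 by (simp flip: map_map)
  then have "map (inv w) r = r" using w(1) map_inv_map by metis
  note w = w \<open>map w r = r\<close> this
  have "(\<lambda>z. delta ([u2], r) z - delta ([u1], r) z + delta ([w], r) z) \<in> boundaries1 \<Gamma> 1"
    using cocycle_in_boundaries1[OF w(1) u2(1) assms(2)] w(2,4) by simp
  from boundaries1.diff_mem[OF boundaries1.diff_mem[OF u1(3) u2(3)] this]
  have "(\<lambda>z. x z - y z - delta ([w], r) z) \<in> boundaries1 \<Gamma> 1" by (simp add: algebra_simps)
  then show ?case using w(1,3) by blast
qed

lemma cycle_normal_form:
  assumes "c \<in> cycles1 \<Gamma> 1"
  obtains R U where "finite R" "\<And>r. r \<in> R \<Longrightarrow> r \<in> tuples 1 \<and> orbit_rep r = r"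
    "\<And>r. r \<in> R \<Longrightarrow> U r \<in> \<Gamma> \<and> map (U r) r = r"
    "(\<lambda>z. c z - (\<Sum>r\<in>R. delta ([U r], r) z)) \<in> boundaries1 \<Gamma> 1"
proof -
  have "c \<in> chains \<Gamma> 1 1" using assms unfolding cycles1_def by blast
  from zspan_UN_decompose[OF retraction_in_stabilizer_span[OF this]]
  obtain R w where R: "finite R" "R \<subseteq> {r \<in> tuples 1. orbit_rep r = r}"
    and w: "\<forall>r\<in>R. w r \<in> zspan (stabilizer_chains r)"
    and lin_c: "lin retraction c = (\<lambda>z. \<Sum>r\<in>R. w r z)"
    by blast
  have "\<forall>r\<in>R. \<exists>u. u \<in> \<Gamma> \<and> map u r = r \<and> (\<lambda>z. w r z - delta ([u], r) z) \<in> boundaries1 \<Gamma> 1"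
  proof
    fix r assume "r \<in> R"
    then show "\<exists>u. u \<in> \<Gamma> \<and> map u r = r \<and> (\<lambda>z. w r z - delta ([u], r) z) \<in> boundaries1 \<Gamma> 1"
      using stabilizer_span_homologous[of "w r" r] w R(2) by blast
  qed
  then obtain U where U: "\<forall>r\<in>R. U r \<in> \<Gamma> \<and> map (U r) r = r \<and>
      (\<lambda>z. w r z - delta ([U r], r) z) \<in> boundaries1 \<Gamma> 1"
    by (rule bchoice[THEN exE])
  have "(\<lambda>z. (c z - lin retraction c z) + (\<Sum>r\<in>R. w r z - delta ([U r], r) z)) \<in> boundaries1 \<Gamma> 1"
    using cycle_homologous_to_retraction[OF assms] U R(1)
    by (intro boundaries1.add_mem boundaries1.sum_mem) auto
  then have "(\<lambda>z. c z - (\<Sum>r\<in>R. delta ([U r], r) z)) \<in> boundaries1 \<Gamma> 1"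
    by (simp add: lin_c sum_subtractf)
  moreover have "\<And>r. r \<in> R \<Longrightarrow> r \<in> tuples 1 \<and> orbit_rep r = r" using R(2) by blast
  moreover have "\<And>r. r \<in> R \<Longrightarrow> U r \<in> \<Gamma> \<and> map (U r) r = r" using U by blast
  ultimately show ?thesis using that[OF R(1)] by blast
qed

section \<open>The logarithmic multiplier cocycle\<close>

definition orbit :: "pt \<Rightarrow> pt set" where
  "orbit z = (\<lambda>\<gamma>. \<gamma> z) ` \<Gamma>"

definition orbit_transporter :: "pt \<Rightarrow> pt \<Rightarrow> (pt \<Rightarrow> pt)" where
  "orbit_transporter z p = (SOME \<gamma>. \<gamma> \<in> \<Gamma> \<and> \<gamma> z = p)"

definition stab_cocycle :: "pt \<Rightarrow> (pt \<Rightarrow> pt) \<Rightarrow> pt \<Rightarrow> (pt \<Rightarrow> pt)" where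
  "stab_cocycle z g p = inv (orbit_transporter z p) \<circ> g \<circ> orbit_transporter z (inv g p)"

text \<open>The homomorphism u \<mapsto> log |multiplier u| on the stabilizer of z1, induced up to \<Gamma>
  along the orbit of z1 (Shapiro's lemma); it is a 1-cocycle with values in the dual of S_0.\<close>

definition log_weight :: "pt \<Rightarrow> pt \<Rightarrow> (pt \<Rightarrow> pt) list \<times> pt list \<Rightarrow> real" where
  "log_weight z0 z1 k = (if hd (snd k) \<in> orbit z1
     then ln (norm (multiplier (pair_conj z0 z1 (stab_cocycle z1 (hd (fst k)) (hd (snd k)))))) else 0)"

definition log_weight_bd :: "pt \<Rightarrow> pt \<Rightarrow> (pt \<Rightarrow> pt) list \<times> pt list \<Rightarrow> real" where
  "log_weight_bd z0 z1 k = pairing (coeff_bd k) (log_weight z0 z1)"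

lemma orbit_transporter:
  assumes "p \<in> orbit z"
  shows "orbit_transporter z p \<in> \<Gamma>" "orbit_transporter z p z = p"
proof -
  have "\<exists>\<gamma>. \<gamma> \<in> \<Gamma> \<and> \<gamma> z = p" using assms unfolding orbit_def by blast
  then show "orbit_transporter z p \<in> \<Gamma>" "orbit_transporter z p z = p"
    unfolding orbit_transporter_def by (metis (mono_tags, lifting) someI_ex)+
qed

lemma self_in_orbit: "z \<in> orbit z"
  unfolding orbit_def using id_in by (metis id_apply image_eqI)

lemma inv_in_orbit_iff:
  assumes g: "g \<in> \<Gamma>"
  shows "inv g p \<in> orbit z \<longleftrightarrow> p \<in> orbit z"
proof
  assume "inv g p \<in> orbit z"
  then obtain \<gamma> where "\<gamma> \<in> \<Gamma>" "inv g p = \<gamma> z" unfolding orbit_def by blast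
  then have "g \<circ> \<gamma> \<in> \<Gamma>" "p = (g \<circ> \<gamma>) z" using g by (auto simp: inv_apply_eq_iff)
  then show "p \<in> orbit z" unfolding orbit_def by blast
next
  assume "p \<in> orbit z"
  then obtain \<gamma> where "\<gamma> \<in> \<Gamma>" "p = \<gamma> z" unfolding orbit_def by blast
  then have "inv g \<circ> \<gamma> \<in> \<Gamma>" "inv g p = (inv g \<circ> \<gamma>) z" using g by auto
  then show "inv g p \<in> orbit z" unfolding orbit_def by blast
qed

lemma stab_cocycle:
  assumes "g \<in> \<Gamma>" "p \<in> orbit z"
  shows "stab_cocycle z g p \<in> \<Gamma>" "stab_cocycle z g p z = z"
proof -
  have q: "inv g p \<in> orbit z" using inv_in_orbit_iff assms by blast
  show "stab_cocycle z g p \<in> \<Gamma>"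
    unfolding stab_cocycle_def using orbit_transporter(1) assms q by blast
  show "stab_cocycle z g p z = z"
    unfolding stab_cocycle_def using orbit_transporter[OF q] orbit_transporter[OF assms(2)] assms(1)
    by (simp add: inv_apply_eq_iff)
qed

lemma stab_cocycle_comp:
  assumes "g \<in> \<Gamma>" "h \<in> \<Gamma>" "p \<in> orbit z"
  shows "stab_cocycle z (g \<circ> h) p = stab_cocycle z g p \<circ> stab_cocycle z h (inv g p)"
proof -
  have "orbit_transporter z (inv g p) \<in> \<Gamma>" using orbit_transporter inv_in_orbit_iff assms by blast
  then show ?thesis
    unfolding stab_cocycle_def using inv_comp[OF assms(1,2)] by (simp add: fun_eq_iff)
qed

lemma log_weight_bd_pair: "log_weight_bd z0 z1 (gs, [a, b]) = log_weight z0 z1 (gs, [b]) - log_weight z0 z1 (gs, [a])"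
  by (simp add: log_weight_bd_def coeff_bd_pair)

context
  fixes z0 z1 :: pt
  assumes z01: "z0 \<noteq> z1"
begin

lemma log_weight_cocycle:
  assumes g: "g \<in> \<Gamma>" and h: "h \<in> \<Gamma>"
  shows "log_weight z0 z1 ([h], [inv g p]) - log_weight z0 z1 ([g \<circ> h], [p]) + log_weight z0 z1 ([g], [p]) = 0"
proof (cases "p \<in> orbit z1")
  case True
  have q: "inv g p \<in> orbit z1" using inv_in_orbit_iff g True by blast
  note s1 = stab_cocycle[OF g True] and s2 = stab_cocycle[OF h q]
  have "multiplier (pair_conj z0 z1 (stab_cocycle z1 (g \<circ> h) p)) =
    multiplier (pair_conj z0 z1 (stab_cocycle z1 g p)) * multiplier (pair_conj z0 z1 (stab_cocycle z1 h (inv g p)))"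
    unfolding stab_cocycle_comp[OF g h True] using s1 s2 in_PGL2
    by (intro multiplier_pair_conj_comp[OF z01]) auto
  moreover have "multiplier (pair_conj z0 z1 (stab_cocycle z1 g p)) \<noteq> 0"
    "multiplier (pair_conj z0 z1 (stab_cocycle z1 h (inv g p))) \<noteq> 0"
    using multiplier_pair_conj_nonzero[OF z01] s1 s2 in_PGL2 by auto
  ultimately show ?thesis using True q by (simp add: log_weight_def norm_mult ln_mult)
next
  case False
  then have "inv g p \<notin> orbit z1" using inv_in_orbit_iff g by blast
  then show ?thesis using False by (simp add: log_weight_def)
qed

lemma log_weight_id: "log_weight z0 z1 ([id], [p]) = 0"
proof (cases "p \<in> orbit z1")
  case True
  then have "stab_cocycle z1 id p = id"
    unfolding stab_cocycle_def using orbit_transporter(1)[OF True] by simp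
  then show ?thesis by (simp add: log_weight_def pair_conj_id[OF z01])
qed (simp add: log_weight_def)

lemma log_weight_stabilizer:
  assumes u: "u \<in> \<Gamma>" "u z1 = z1"
  shows "log_weight z0 z1 ([u], [z1]) = ln (norm (multiplier (pair_conj z0 z1 u)))"
proof -
  define T where "T = orbit_transporter z1 z1"
  have T: "T \<in> \<Gamma>" "T z1 = z1" "inv T \<in> \<Gamma>" "inv T z1 = z1"
    using orbit_transporter[OF self_in_orbit] unfolding T_def by (auto simp: inv_apply_eq_iff)
  have "inv u z1 = z1" using u by (simp add: inv_apply_eq_iff)
  then have "stab_cocycle z1 u z1 = (inv T \<circ> u) \<circ> T" unfolding stab_cocycle_def T_def by simp
  moreover have mult: "multiplier (pair_conj z0 z1 (g \<circ> h)) =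
      multiplier (pair_conj z0 z1 g) * multiplier (pair_conj z0 z1 h)"
    if "g \<in> \<Gamma>" "g z1 = z1" "h \<in> \<Gamma>" "h z1 = z1" for g h
    using multiplier_pair_conj_comp[OF z01 in_PGL2 _ in_PGL2] that by blast
  moreover have "multiplier (pair_conj z0 z1 (inv T)) * multiplier (pair_conj z0 z1 T) = 1"
    using mult[OF T(3,4,1,2)] T(1) by (simp add: pair_conj_id[OF z01])
  ultimately have "multiplier (pair_conj z0 z1 (stab_cocycle z1 u z1)) = multiplier (pair_conj z0 z1 u)"
    using T u by (simp add: mult comp_in)
  then show ?thesis using self_in_orbit by (simp add: log_weight_def)
qed

lemma pairing_boundaries0_log_weight:
  "x \<in> boundaries1 \<Gamma> 0 \<Longrightarrow> pairing x (log_weight z0 z1) = 0"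
proof (rule pairing_boundaries1_eq_0)
  fix g h zs assume g: "g \<in> \<Gamma>" and h: "h \<in> \<Gamma>" and "zs \<in> tuples 0"
  then obtain p where "zs = [p]" unfolding tuples_0_iff by blast
  then show "log_weight z0 z1 ([h], map (inv g) zs) - log_weight z0 z1 ([g \<circ> h], zs) + log_weight z0 z1 ([g], zs) = 0"
    using log_weight_cocycle[OF g h] by simp
next
  fix gs zs and \<tau> :: "nat \<Rightarrow> nat" assume "\<tau> permutes {..0}"
  then show "log_weight z0 z1 (gs, permute_tuple \<tau> zs) = of_int (sign \<tau>) * log_weight z0 z1 (gs, zs)"
    by (simp add: permutes_sing)
qed

lemma pairing_boundaries1_log_weight_bd:
  "x \<in> boundaries1 \<Gamma> 1 \<Longrightarrow> pairing x (log_weight_bd z0 z1) = 0"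
proof (rule pairing_boundaries1_eq_0)
  fix g h zs assume g: "g \<in> \<Gamma>" and h: "h \<in> \<Gamma>" and "zs \<in> tuples 1"
  then obtain a b where "zs = [a, b]" unfolding tuples_1_iff by blast
  then show "log_weight_bd z0 z1 ([h], map (inv g) zs) - log_weight_bd z0 z1 ([g \<circ> h], zs)
      + log_weight_bd z0 z1 ([g], zs) = 0"
    using log_weight_cocycle[OF g h, of a] log_weight_cocycle[OF g h, of b]
    by (simp add: log_weight_bd_pair algebra_simps)
next
  fix gs zs and \<tau> :: "nat \<Rightarrow> nat" assume "zs \<in> tuples 1" "\<tau> permutes {..1}"
  then show "log_weight_bd z0 z1 (gs, permute_tuple \<tau> zs) = of_int (sign \<tau>) * log_weight_bd z0 z1 (gs, zs)"
    by (intro alternating_on_pairs) (simp_all add: log_weight_bd_pair)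
qed

lemma pairing_log_weight_bd_eq_0:
  assumes "c \<in> chains \<Gamma> 1 1" "lin coeff_bd c \<in> boundaries1 \<Gamma> 0"
  shows "pairing c (log_weight_bd z0 z1) = 0"
  using pairing_boundaries0_log_weight[OF assms(2)] finite_supp_chains[OF assms(1)]
  by (simp add: pairing_lin log_weight_bd_def[abs_def])

lemma stabilized_pairs_equivalent:
  assumes u: "u \<in> \<Gamma>" "u z0 = z0" "u z1 = z1" "u \<noteq> id"
    and v: "v \<in> \<Gamma>" "v y0 = y0" "v y1 = y1" "v \<noteq> id" and y01: "y0 \<noteq> y1"
    and meet: "y0 \<in> orbit z1 \<or> y1 \<in> orbit z1"
  shows "[y0, y1] \<in> pair_orbit [z0, z1]"
proof -
  from meet consider \<gamma> where "\<gamma> \<in> \<Gamma>" "\<gamma> z1 = y1" | \<gamma> where "\<gamma> \<in> \<Gamma>" "\<gamma> z1 = y0"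
    unfolding orbit_def by blast
  then show ?thesis
  proof cases
    case 1
    then have "inv \<gamma> y1 = z1" by (simp add: inv_apply_eq_iff)
    then have "inv \<gamma> y0 = z0" using stabilized_pairs_aligned[OF z01 u v y01 inv_in[OF 1(1)]] by blast
    then have "[y0, y1] = map \<gamma> [z0, z1]" using 1 by (simp add: inv_apply_eq_iff)
    then show ?thesis using map_in_pair_orbit[OF 1(1), of "[z0, z1]"] by metis
  next
    case 2
    then have "inv \<gamma> y0 = z1" by (simp add: inv_apply_eq_iff)
    then have "inv \<gamma> y1 = z0"
      using stabilized_pairs_aligned[OF z01 u v(1,3,2,4) y01[symmetric] inv_in[OF 2(1)]] by blast
    then have "[y0, y1] = map \<gamma> (rev [z0, z1])" using 2 by (simp add: inv_apply_eq_iff)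
    then show ?thesis using map_rev_in_pair_orbit[OF 2(1), of "[z0, z1]"] by metis
  qed
qed

lemma log_weight_bd_other_pair:
  assumes u: "u \<in> \<Gamma>" "u z0 = z0" "u z1 = z1" "u \<noteq> id"
    and rep: "orbit_rep [z0, z1] = [z0, z1]" "orbit_rep [y0, y1] = [y0, y1]" "[y0, y1] \<noteq> [z0, z1]"
    and v: "v \<in> \<Gamma>" "v y0 = y0" "v y1 = y1" and y01: "y0 \<noteq> y1"
  shows "log_weight_bd z0 z1 ([v], [y0, y1]) = 0"
proof (cases "v = id")
  case True
  then show ?thesis by (simp add: log_weight_bd_pair log_weight_id)
next
  case False
  have "\<not> (y0 \<in> orbit z1 \<or> y1 \<in> orbit z1)"
  proof
    assume "y0 \<in> orbit z1 \<or> y1 \<in> orbit z1"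
    then have "orbit_rep [y0, y1] = orbit_rep [z0, z1]"
      using stabilized_pairs_equivalent[OF u v False y01] orbit_rep_eq by blast
    then show False using rep by simp
  qed
  then show ?thesis by (simp add: log_weight_bd_pair log_weight_def)
qed

lemma pairing_normal_form_log_weight_bd:
  assumes R: "finite R" "\<And>r. r \<in> R \<Longrightarrow> r \<in> tuples 1 \<and> orbit_rep r = r"
    and U: "\<And>r. r \<in> R \<Longrightarrow> U r \<in> \<Gamma> \<and> map (U r) r = r"
    and r: "[z0, z1] \<in> R" and nontrivial: "U [z0, z1] \<noteq> id"
  shows "pairing (\<lambda>z. \<Sum>r\<in>R. delta ([U r], r) z) (log_weight_bd z0 z1) =
    ln (norm (multiplier (pair_conj z0 z1 (U [z0, z1]))))"
proof -
  define u where "u = U [z0, z1]"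
  have u: "u \<in> \<Gamma>" "u z0 = z0" "u z1 = z1" "u \<noteq> id" using U[OF r] nontrivial unfolding u_def by auto
  have "log_weight_bd z0 z1 ([U r'], r') = 0" if r': "r' \<in> R - {[z0, z1]}" for r'
  proof -
    obtain y0 y1 where y: "r' = [y0, y1]" "y0 \<noteq> y1" using R(2) r' unfolding tuples_1_iff by blast
    have "orbit_rep [z0, z1] = [z0, z1]" "orbit_rep [y0, y1] = [y0, y1]" "[y0, y1] \<noteq> [z0, z1]"
      using R(2) r r' y(1) by auto
    moreover have "U r' \<in> \<Gamma>" "U r' y0 = y0" "U r' y1 = y1" using U r' y(1) by auto
    ultimately show ?thesis using log_weight_bd_other_pair[OF u _ _ _ _ _ _ y(2)] y(1) by simp
  qed
  then have "pairing (\<lambda>z. \<Sum>r\<in>R. delta ([U r], r) z) (log_weight_bd z0 z1) = log_weight_bd z0 z1 ([u], [z0, z1])"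
    using R(1) sum.remove[OF R(1) r, of "\<lambda>r'. log_weight_bd z0 z1 ([U r'], r')"]
    by (simp add: pairing_sum u_def)
  moreover have "z0 \<notin> orbit z1" using fixed_points_inequivalent[OF z01 u] unfolding orbit_def by blast
  then have "log_weight z0 z1 ([u], [z0]) = 0" by (simp add: log_weight_def)
  ultimately show ?thesis
    unfolding u_def[symmetric] by (simp add: log_weight_bd_pair log_weight_stabilizer[OF u(1,3)])
qed

end

lemma normal_form_stabilizers_trivial:
  assumes c: "c \<in> cycles1 \<Gamma> 1" "lin coeff_bd c \<in> boundaries1 \<Gamma> 0"
    and R: "finite R" "\<And>r. r \<in> R \<Longrightarrow> r \<in> tuples 1 \<and> orbit_rep r = r"
    and U: "\<And>r. r \<in> R \<Longrightarrow> U r \<in> \<Gamma> \<and> map (U r) r = r"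
    and homologous: "(\<lambda>z. c z - (\<Sum>r\<in>R. delta ([U r], r) z)) \<in> boundaries1 \<Gamma> 1"
    and r: "r \<in> R"
  shows "U r = id"
proof (rule ccontr)
  assume nontrivial: "U r \<noteq> id"
  obtain z0 z1 where r01: "r = [z0, z1]" and z01: "z0 \<noteq> z1"
    using R(2)[OF r] unfolding tuples_1_iff by blast
  let ?W = "log_weight_bd z0 z1" and ?\<Sigma> = "\<lambda>z. \<Sum>r\<in>R. delta ([U r], r) z"
  have c_chain: "c \<in> chains \<Gamma> 1 1" using c(1) unfolding cycles1_def by blast
  have "pairing c ?W = 0" using pairing_log_weight_bd_eq_0[OF z01 c_chain c(2)] .
  moreover have "pairing (\<lambda>z. c z - ?\<Sigma> z) ?W = 0"
    using pairing_boundaries1_log_weight_bd[OF z01 homologous] .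
  ultimately have "pairing ?\<Sigma> ?W = 0"
    using R(1) finite_supp_chains[OF c_chain] by simp
  then have "norm (multiplier (pair_conj z0 z1 (U r))) = 1"
    using pairing_normal_form_log_weight_bd[OF z01 R U] r nontrivial
    multiplier_pair_conj_nonzero[OF z01 in_PGL2] U[OF r] unfolding r01 by simp
  moreover obtain a where "pair_conj z0 z1 (U r) = affm a 0"
    using pair_conj_fix_both[OF z01 in_PGL2] U[OF r] unfolding r01 by auto
  ultimately have "U r = id" using unimodular_multiplier_trivial[OF z01] U[OF r] by simp
  then show False using nontrivial by simp
qed

theorem boundary_map_injective_on_H1:
  assumes "c \<in> cycles1 \<Gamma> 1" "lin coeff_bd c \<in> boundaries1 \<Gamma> 0"
  shows "c \<in> boundaries1 \<Gamma> 1"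
proof -
  obtain R U where R: "finite R" "\<And>r. r \<in> R \<Longrightarrow> r \<in> tuples 1 \<and> orbit_rep r = r"
    and U: "\<And>r. r \<in> R \<Longrightarrow> U r \<in> \<Gamma> \<and> map (U r) r = r"
    and homologous: "(\<lambda>z. c z - (\<Sum>r\<in>R. delta ([U r], r) z)) \<in> boundaries1 \<Gamma> 1"
    using cycle_normal_form[OF assms(1)] by blast
  have "U r = id" if "r \<in> R" for r
    using normal_form_stabilizers_trivial[OF assms R U homologous that] .
  then have "(\<lambda>z. \<Sum>r\<in>R. delta ([U r], r) z) \<in> boundaries1 \<Gamma> 1"
    using R delta_id_in_boundaries1 by (intro boundaries1.sum_mem) auto
  from boundaries1.add_mem[OF homologous this] show ?thesis by simp
qed

end

theorem lemma3p3:
  fixes \<Gamma> :: "(pt \<Rightarrow> pt) set"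
  assumes "kleinian \<Gamma>" and "torsion_free \<Gamma>" and "finite_covolume \<Gamma>"
  shows "\<forall>c \<in> cycles1 \<Gamma> 1. lin coeff_bd c \<in> boundaries1 \<Gamma> 0 \<longrightarrow> c \<in> boundaries1 \<Gamma> 1"
proof -
  interpret torsion_free_kleinian \<Gamma> using assms(1,2) by unfold_locales
  show ?thesis using boundary_map_injective_on_H1 by blast
qed

end
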